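(* For all integers $n, p \geq 4$, the language $$L_{n,p} = \{ w \in \{0,1\}^{*} \ | \ |w|_{0} \equiv 0 \ (\mathrm{mod}\ n), \ |w|_{1} \equiv 0 \ (\mathrm{mod}\ p) \}$$ is toric, i.e. $g(L_{n,p}) = 1$.
   Context: $|w|_a$ denotes the number of occurrences of the letter $a$ in the word $w$. A DFA over a finite alphabet $\Sigma$ is $(Q,q_0,F,\delta)$ with $Q$ finite and total transition function $\delta:Q\times\Sigma\to Q$. Its underlying undirected multigraph has vertex set $Q$ and one edge joining $q$ and $\delta(q,a)$ for every $(q,a)$ (self-loops and parallel edges kept). The genus of a finite multigraph is the least genus of a closed orientable surface into which it embeds; $g(A)$ is the genus of the underlying multigraph of $A$; $g(L)=\min\{g(A): A\text{ a DFA recognizing }L\}$. *)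

theory Defs
  imports Main
begin

text \<open>A DFA over alphabet Alph: states are a finite set Q of naturals (any finite state
set can be renamed into nat), start state q0, final states F, transition function
delta, total on Q x Alph.\<close>

definition is_dfa :: "'a set \<Rightarrow> nat set \<Rightarrow> nat \<Rightarrow> nat set \<Rightarrow> (nat \<Rightarrow> 'a \<Rightarrow> nat) \<Rightarrow> bool" where
  "is_dfa Alph Q q0 F delta \<longleftrightarrow> finite Alph \<and> finite Q \<and> q0 \<in> Q \<and> F \<subseteq> Q \<and>
     (\<forall>q\<in>Q. \<forall>a\<in>Alph. delta q a \<in> Q)"

definition dfa_lang :: "'a set \<Rightarrow> nat \<Rightarrow> nat set \<Rightarrow> (nat \<Rightarrow> 'a \<Rightarrow> nat) \<Rightarrow> 'a list set" where
  "dfa_lang Alph q0 F delta = {w \<in> lists Alph. foldl delta q0 w \<in> F}"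

text \<open>Underlying multigraph, as a set of darts (half-edges). The edge for (q,a) has
the dart (q,a,True) at q and the dart (q,a,False) at delta q a.\<close>

definition darts :: "'a set \<Rightarrow> nat set \<Rightarrow> (nat \<times> 'a \<times> bool) set" where
  "darts Alph Q = Q \<times> Alph \<times> UNIV"

fun dart_vertex :: "(nat \<Rightarrow> 'a \<Rightarrow> nat) \<Rightarrow> nat \<times> 'a \<times> bool \<Rightarrow> nat" where
  "dart_vertex delta (q, a, b) = (if b then q else delta q a)"

fun dart_rev :: "nat \<times> 'a \<times> bool \<Rightarrow> nat \<times> 'a \<times> bool" where
  "dart_rev (q, a, b) = (q, a, \<not> b)"

definition rotation_system :: "'a set \<Rightarrow> nat set \<Rightarrow> (nat \<Rightarrow> 'a \<Rightarrow> nat)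
    \<Rightarrow> (nat \<times> 'a \<times> bool \<Rightarrow> nat \<times> 'a \<times> bool) \<Rightarrow> bool" where
  "rotation_system Alph Q delta sigma \<longleftrightarrow>
     bij_betw sigma (darts Alph Q) (darts Alph Q) \<and>
     (\<forall>d\<in>darts Alph Q. dart_vertex delta (sigma d) = dart_vertex delta d) \<and>
     (\<forall>d\<in>darts Alph Q. \<forall>e\<in>darts Alph Q.
        dart_vertex delta d = dart_vertex delta e \<longrightarrow> (\<exists>n. (sigma ^^ n) d = e))"

text \<open>Faces of the cellular embedding determined by sigma: orbits of sigma o dart_rev,
plus one face for every isolated vertex.\<close>

definition num_faces :: "'a set \<Rightarrow> nat set \<Rightarrow> (nat \<Rightarrow> 'a \<Rightarrow> nat)
    \<Rightarrow> (nat \<times> 'a \<times> bool \<Rightarrow> nat \<times> 'a \<times> bool) \<Rightarrow> nat" where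
  "num_faces Alph Q delta sigma =
     card {{((sigma \<circ> dart_rev) ^^ n) d | n. True} | d. d \<in> darts Alph Q}
     + card {q \<in> Q. \<forall>d\<in>darts Alph Q. dart_vertex delta d \<noteq> q}"

definition graph_edges :: "'a set \<Rightarrow> nat set \<Rightarrow> (nat \<Rightarrow> 'a \<Rightarrow> nat) \<Rightarrow> nat rel" where
  "graph_edges Alph Q delta = {(q, delta q a) | q a. q \<in> Q \<and> a \<in> Alph}"

definition num_components :: "'a set \<Rightarrow> nat set \<Rightarrow> (nat \<Rightarrow> 'a \<Rightarrow> nat) \<Rightarrow> nat" where
  "num_components Alph Q delta =
     card (Q // ((graph_edges Alph Q delta \<union> (graph_edges Alph Q delta)\<inverse>)\<^sup>*))"

text \<open>Genus of the underlying multigraph (Heffter-Edmonds / Battle-Harary-Kodama-Youngs):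
the least g such that some rotation system gives V - E + F = 2c - 2g.\<close>

definition dfa_genus :: "'a set \<Rightarrow> nat set \<Rightarrow> (nat \<Rightarrow> 'a \<Rightarrow> nat) \<Rightarrow> nat" where
  "dfa_genus Alph Q delta = (LEAST g. \<exists>sigma. rotation_system Alph Q delta sigma \<and>
     int (card Q) - int (card Q * card Alph) + int (num_faces Alph Q delta sigma)
       = 2 * int (num_components Alph Q delta) - 2 * int g)"

definition lang_genus :: "'a set \<Rightarrow> 'a list set \<Rightarrow> nat" where
  "lang_genus Alph L = (LEAST g. \<exists>Q q0 F delta. is_dfa Alph Q q0 F delta \<and>
     dfa_lang Alph q0 F delta = L \<and> dfa_genus Alph Q delta = g)"

definition L_np :: "nat \<Rightarrow> nat \<Rightarrow> nat list set" where
  "L_np n p = {w \<in> lists {0, 1}. count_list w 0 mod n = 0 \<and> count_list w 1 mod p = 0}"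

end

theory Submission
  imports Defs "HOL-Combinatorics.Orbits" "HOL-Combinatorics.Cycles"
begin

lemma permutation_orbit_eq:
  assumes "permutation f" "y \<in> orbit f x"
  shows "orbit f y = orbit f x"
  using orbit_cyclic_eq3[OF cyclic_on_orbit'[OF assms(1)] assms(2)] .

lemma permutation_funpow_in_orbit:
  assumes "permutation f"
  shows "(f ^^ n) x \<in> orbit f x"
  using orbit_altdef_permutation[OF assms] by blast

lemma orbit_subset_invariant:
  assumes "f ` X \<subseteq> X" "x \<in> X"
  shows "orbit f x \<subseteq> X"
proof
  fix y assume "y \<in> orbit f x"
  then show "y \<in> X" by induct (use assms in auto)
qed

lemma card_orbit_eq_least_power:
  assumes "permutation f"
  shows "card (orbit f x) = least_power f x"
proof -
  have "orbit f x = set (support f x)"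
    using support_set[OF assms] orbit_altdef_permutation[OF assms] by auto
  then show ?thesis
    using distinct_card[OF cycle_of_permutation[OF assms]] by simp
qed

lemma inj_on_funpow_least_power:
  assumes "permutation f"
  shows "inj_on (\<lambda>i. (f ^^ i) x) {..<least_power f x}"
  using cycle_of_permutation[OF assms, of x] by (simp add: distinct_map atLeast0LessThan)

lemma orbit_eq_funpow_least_power:
  assumes "permutation f"
  shows "orbit f x = (\<lambda>i. (f ^^ i) x) ` {..<least_power f x}"
  using orbit_altdef_bounded[OF least_power_of_permutation[OF assms]] by auto

lemma card_orbit_ge:
  assumes "permutation f" "\<And>j. 0 < j \<Longrightarrow> j < m \<Longrightarrow> (f ^^ j) x \<noteq> x"
  shows "m \<le> card (orbit f x)"
  using least_power_of_permutation[OF assms(1), of x] assms(2)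
  unfolding card_orbit_eq_least_power[OF assms(1)] by (meson not_less)

lemma card_orbit_le:
  assumes "permutation f" "(f ^^ m) x = x" "0 < m"
  shows "card (orbit f x) \<le> m"
  unfolding card_orbit_eq_least_power[OF assms(1)] using assms(2,3) by (rule least_power_le)

lemma funpow_eq_if_agree:
  assumes "\<And>i. i < n \<Longrightarrow> g ((f ^^ i) x) = f ((f ^^ i) x)"
  shows "(g ^^ n) x = (f ^^ n) x"
  using assms by (induction n) auto

lemma orbit_transpose_split:
  assumes perm: "permutation f" and uv: "u \<noteq> v" "v \<in> orbit f u"
  defines "g \<equiv> f \<circ> transpose u v"
  shows "orbit g u \<union> orbit g v = orbit f u" "orbit g u \<inter> orbit g v = {}"
    "\<And>w. w \<notin> orbit f u \<Longrightarrow> orbit g w = orbit f w"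
proof -
  define k where "k = least_power f u"
  define P where "P j = (f ^^ j) u" for j
  have Pk: "P k = u" "k > 0"
    using least_power_of_permutation[OF perm] unfolding k_def P_def by auto
  have orbit_f: "orbit f u = P ` {..<k}"
    using orbit_eq_funpow_least_power[OF perm] unfolding k_def P_def by simp
  have P_inj: "i = j" if "i < k" "j < k" "P i = P j" for i j
    using inj_on_funpow_least_power[OF perm, of u] that unfolding k_def P_def inj_on_def by blast
  obtain m where m: "v = P m" "m < k" using uv(2) orbit_f by auto
  have "m > 0" using m uv(1) Pk P_inj by (metis funpow_0 gr0I P_def)
  have g_off: "g x = f x" if "x \<noteq> u" "x \<noteq> v" for x
    using that by (simp add: g_def)
  have g_path: "(g ^^ i) (P j) = P (j + i)" if "\<And>l. l < i \<Longrightarrow> P (j + l) \<noteq> u \<and> P (j + l) \<noteq> v" for i j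
  proof -
    have shift: "(f ^^ l) ((f ^^ j) u) = P (j + l)" for l
      unfolding P_def by (metis add.commute comp_apply funpow_add)
    have "(g ^^ i) ((f ^^ j) u) = (f ^^ i) ((f ^^ j) u)"
      by (rule funpow_eq_if_agree) (use that g_off in \<open>simp add: shift\<close>)
    then show ?thesis unfolding P_def[of j] using shift[of i] by simp
  qed
  have avoid: "P (j + l) \<noteq> u \<and> P (j + l) \<noteq> v" if "j + l < k" "j + l \<noteq> 0" "j + l \<noteq> m" for j l
    using that P_inj[of "j + l" 0] P_inj[of "j + l" m] Pk m by (auto simp: P_def)
  have gu: "(g ^^ i) u = P (m + i)" if range: "1 \<le> i" "i \<le> k - m" for i
  proof -
    obtain i' where i: "i = Suc i'" using range by (cases i) auto
    have "(g ^^ i) u = (g ^^ i') (g u)" by (simp only: i funpow_Suc_right o_apply)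
    also have "g u = P (m + 1)" using m(1) by (simp add: g_def P_def)
    also have "(g ^^ i') (P (m + 1)) = P (m + 1 + i')"
      by (rule g_path) (use range i avoid[of "m + 1"] in auto)
    finally show ?thesis by (simp add: i)
  qed
  have gv: "(g ^^ i) v = P i" if range: "1 \<le> i" "i \<le> m" for i
  proof -
    obtain i' where i: "i = Suc i'" using range by (cases i) auto
    have "(g ^^ i) v = (g ^^ i') (g v)" by (simp only: i funpow_Suc_right o_apply)
    also have "g v = P 1" using uv(1) by (simp add: g_def P_def)
    also have "(g ^^ i') (P 1) = P (1 + i')"
      by (rule g_path) (use range i m avoid[of 1] in auto)
    finally show ?thesis by (simp add: i)
  qed
  have orbit_gu: "orbit g u = P ` ({0} \<union> {m<..<k})"
  proof -
    have "(g ^^ (k - m)) u = u" using gu[of "k - m"] m Pk by simp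
    then have "orbit g u = (\<lambda>i. (g ^^ i) u) ` {..<k - m}"
      using orbit_altdef_bounded[where f = g and n = "k - m" and s = u] m by auto
    also have "\<dots> = P ` ({0} \<union> {m<..<k})"
    proof (intro set_eqI iffI)
      fix x assume "x \<in> (\<lambda>i. (g ^^ i) u) ` {..<k - m}"
      then obtain i where i: "i \<in> {..<k - m}" "x = (g ^^ i) u" by (rule imageE)
      show "x \<in> P ` ({0} \<union> {m<..<k})"
      proof (cases "i = 0")
        case True
        then have "x = P 0" using i by (simp add: P_def)
        then show ?thesis by (intro image_eqI[where x = 0]) auto
      next
        case False
        then have "x = P (m + i)" using i gu[of i] by simp
        then show ?thesis using i(1) False by (intro image_eqI[where x = "m + i"]) auto
      qed
    next
      fix x assume "x \<in> P ` ({0} \<union> {m<..<k})"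
      then obtain j where j: "j \<in> {0} \<union> {m<..<k}" "x = P j" by (rule imageE)
      show "x \<in> (\<lambda>i. (g ^^ i) u) ` {..<k - m}"
      proof (cases "j = 0")
        case True
        then have "x = (g ^^ 0) u" using j by (simp add: P_def)
        then show ?thesis using m(2) by (intro image_eqI[where x = 0]) auto
      next
        case False
        then have "m < j" "j < k" using j by auto
        then have "x = (g ^^ (j - m)) u" using gu[of "j - m"] j(2) by simp
        then show ?thesis using \<open>m < j\<close> \<open>j < k\<close> by (intro image_eqI[where x = "j - m"]) auto
      qed
    qed
    finally show ?thesis .
  qed
  have orbit_gv: "orbit g v = P ` {0<..m}"
  proof -
    have "(g ^^ m) v = v" using gv[of m] \<open>m > 0\<close> m by simp
    then have "orbit g v = (\<lambda>i. (g ^^ i) v) ` {..<m}"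
      using orbit_altdef_bounded[where f = g and n = m and s = v] \<open>m > 0\<close> by auto
    also have "\<dots> = P ` {0<..m}"
    proof (intro set_eqI iffI)
      fix x assume "x \<in> (\<lambda>i. (g ^^ i) v) ` {..<m}"
      then obtain i where i: "i \<in> {..<m}" "x = (g ^^ i) v" by (rule imageE)
      show "x \<in> P ` {0<..m}"
      proof (cases "i = 0")
        case True
        then have "x = P m" using i m by simp
        then show ?thesis using \<open>m > 0\<close> by (intro image_eqI[where x = m]) auto
      next
        case False
        then have "x = P i" using i gv[of i] by simp
        then show ?thesis using i(1) False by (intro image_eqI[where x = i]) auto
      qed
    next
      fix x assume "x \<in> P ` {0<..m}"
      then obtain j where j: "j \<in> {0<..m}" "x = P j" by (rule imageE)
      show "x \<in> (\<lambda>i. (g ^^ i) v) ` {..<m}"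
      proof (cases "j = m")
        case True
        then have "x = (g ^^ 0) v" using j m by simp
        then show ?thesis using \<open>m > 0\<close> by (intro image_eqI[where x = 0]) auto
      next
        case False
        then have "x = (g ^^ j) v" using gv[of j] j by simp
        then show ?thesis using j(1,2) False by (intro image_eqI[where x = j]) auto
      qed
    qed
    finally show ?thesis .
  qed
  show "orbit g u \<union> orbit g v = orbit f u"
    unfolding orbit_gu orbit_gv orbit_f image_Un[symmetric] using m by (intro arg_cong[where f = "image P"]) auto
  show "orbit g u \<inter> orbit g v = {}"
  proof (rule equals0I)
    fix x assume "x \<in> orbit g u \<inter> orbit g v"
    then obtain i j where i: "i \<in> {0} \<union> {m<..<k}" "x = P i" and j: "j \<in> {0<..m}" "x = P j"
      unfolding orbit_gu orbit_gv by (elim IntE imageE)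
    then have "i < k" "j < k" using m(2) by auto
    then have "i = j" using i(2) j(2) by (intro P_inj) simp_all
    then show False using i(1) j(1) by auto
  qed
  show "orbit g w = orbit f w" if w: "w \<notin> orbit f u" for w
  proof (rule orbit_cong)
    show "w \<in> orbit f w" using permutation_self_in_orbit[OF perm] .
    fix x assume "x \<in> orbit f w"
    then have "orbit f x = orbit f w" using permutation_orbit_eq[OF perm] by blast
    moreover have "orbit f u = orbit f v" using permutation_orbit_eq[OF perm uv(2)] by simp
    ultimately have "x \<noteq> u" "x \<noteq> v"
      using w permutation_self_in_orbit[OF perm] by auto
    then show "g x = f x" by (rule g_off)
  qed
qed

lemma orbit_transpose_merge:
  assumes perm: "permutation f" and uv: "u \<noteq> v" "v \<notin> orbit f u"
  shows "v \<in> orbit (f \<circ> transpose u v) u"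
proof -
  define g where "g = f \<circ> transpose u v"
  define k where "k = least_power f v"
  have k: "(f ^^ k) v = v" "k > 0"
    using least_power_of_permutation[OF perm] unfolding k_def by auto
  have "u \<notin> orbit f v"
    using uv(2) permutation_orbit_eq[OF perm] permutation_self_in_orbit[OF perm] by blast
  then have off: "g ((f ^^ i) (f v)) = f ((f ^^ i) (f v))" if "i < k - 1" for i
  proof -
    have "Suc i \<in> {..<k}" "0 \<in> {..<k}" using that by auto
    then have "(f ^^ Suc i) v \<noteq> (f ^^ 0) v"
      using inj_on_funpow_least_power[OF perm, of v] unfolding k_def[symmetric] inj_on_def by blast
    moreover have "(f ^^ Suc i) v = (f ^^ i) (f v)" by (simp only: funpow_Suc_right o_apply)
    ultimately have "(f ^^ i) (f v) \<noteq> v" by simp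
    moreover have "(f ^^ i) (f v) \<in> orbit f v"
      using permutation_funpow_in_orbit[OF perm, of "Suc i" v] by (simp only: funpow_Suc_right o_apply)
    ultimately show ?thesis using \<open>u \<notin> orbit f v\<close> by (auto simp: g_def transpose_def)
  qed
  obtain k' where k': "k = Suc k'" using k(2) by (cases k) auto
  have "(g ^^ k) u = (g ^^ k') (f v)" by (simp only: k' funpow_Suc_right o_apply) (simp add: g_def)
  also have "\<dots> = (f ^^ k') (f v)" by (rule funpow_eq_if_agree) (use off k' in simp)
  also have "\<dots> = v" using k(1) by (simp only: k' funpow_Suc_right o_apply)
  finally have "(g ^^ k) u = v" .
  moreover have "permutation g"
    unfolding g_def by (simp add: perm permutation_compose permutation_swap_id)
  ultimately show ?thesis
    unfolding g_def[symmetric] using permutation_funpow_in_orbit[of g k u] by simp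
qed



definition num_orbits :: "('d \<Rightarrow> 'd) \<Rightarrow> 'd set \<Rightarrow> nat" where
  "num_orbits f X = card (orbit f ` X)"

lemma num_orbits_transpose_split:
  assumes perm: "permutation f" and X: "finite X" "f ` X \<subseteq> X" "u \<in> X"
    and uv: "u \<noteq> v" "v \<in> orbit f u"
  shows "num_orbits (f \<circ> transpose u v) X = Suc (num_orbits f X)"
proof -
  define g where "g = f \<circ> transpose u v"
  define U where "U = orbit f u"
  define R where "R = orbit f ` X - {U}"
  have perm_g: "permutation g"
    unfolding g_def by (simp add: perm permutation_compose permutation_swap_id)
  note split = orbit_transpose_split[OF perm uv, folded g_def]
  have "v \<in> X" using orbit_subset_invariant[OF X(2,3)] uv(2) by blast
  have disjoint_U: "S \<inter> U = {}" if "S \<in> R" for S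
  proof -
    obtain x where "S = orbit f x" "S \<noteq> U" using \<open>S \<in> R\<close> unfolding R_def by blast
    then show ?thesis using permutation_orbit_eq[OF perm] unfolding U_def by blast
  qed
  have same_outside: "orbit g x = orbit f x" if "orbit f x \<noteq> U" for x
  proof -
    have "x \<notin> orbit f u"
      using that permutation_orbit_eq[OF perm, of x u] unfolding U_def by blast
    then show ?thesis using split(3) by blast
  qed
  have f_orbits: "orbit f ` X = insert U R"
    using X(3) unfolding R_def U_def by blast
  have g_orbits: "orbit g ` X = insert (orbit g u) (insert (orbit g v) R)"
  proof (intro set_eqI iffI)
    fix S assume "S \<in> orbit g ` X"
    then obtain x where x: "x \<in> X" "S = orbit g x" by (rule imageE)
    show "S \<in> insert (orbit g u) (insert (orbit g v) R)"
    proof (cases "x \<in> U")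
      case True
      then have "x \<in> orbit g u \<or> x \<in> orbit g v" using split(1) unfolding U_def by blast
      then have "S = orbit g u \<or> S = orbit g v" using x(2) permutation_orbit_eq[OF perm_g] by blast
      then show ?thesis by blast
    next
      case False
      then have "orbit f x \<noteq> U" using permutation_self_in_orbit[OF perm, of x] by blast
      then have "S = orbit f x" "orbit f x \<in> R"
        using x same_outside unfolding R_def by auto
      then show ?thesis by simp
    qed
  next
    fix S assume S: "S \<in> insert (orbit g u) (insert (orbit g v) R)"
    have "orbit g u \<in> orbit g ` X" "orbit g v \<in> orbit g ` X"
      using X(3) \<open>v \<in> X\<close> by blast+
    moreover have "S \<in> orbit g ` X" if S_R: "S \<in> R"
    proof -
      obtain x where "x \<in> X" "S = orbit f x" "orbit f x \<noteq> U" using S_R unfolding R_def by blast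
      then show ?thesis using same_outside by (metis image_eqI)
    qed
    ultimately show "S \<in> orbit g ` X" using S by blast
  qed
  have sub: "orbit g u \<subseteq> U" "orbit g v \<subseteq> U"
    using split(1) unfolding U_def by blast+
  have "orbit g u \<notin> R"
  proof
    assume "orbit g u \<in> R"
    then have "orbit g u \<inter> U = {}" by (rule disjoint_U)
    then show False using sub(1) orbit_nonempty[of g u] by blast
  qed
  moreover have "orbit g v \<notin> R"
  proof
    assume "orbit g v \<in> R"
    then have "orbit g v \<inter> U = {}" by (rule disjoint_U)
    then show False using sub(2) orbit_nonempty[of g v] by blast
  qed
  moreover have "orbit g u \<noteq> orbit g v"
    using split(2) orbit_nonempty[of g u] by auto
  moreover have "U \<notin> R" "finite R" using X(1) unfolding R_def by auto
  ultimately show ?thesis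
    unfolding num_orbits_def g_orbits f_orbits g_def[symmetric] by simp
qed

lemma num_orbits_transpose_merge:
  assumes perm: "permutation f" and X: "finite X" "f ` X \<subseteq> X" "u \<in> X" "v \<in> X"
    and uv: "u \<noteq> v" "v \<notin> orbit f u"
  shows "num_orbits f X = Suc (num_orbits (f \<circ> transpose u v) X)"
proof -
  define g where "g = f \<circ> transpose u v"
  have "permutation g"
    unfolding g_def by (simp add: perm permutation_compose permutation_swap_id)
  moreover have "g ` X \<subseteq> X" using X unfolding g_def by (auto simp: transpose_def)
  moreover have "g \<circ> transpose u v = f" by (simp add: g_def fun_eq_iff)
  moreover have "v \<in> orbit g u" unfolding g_def using orbit_transpose_merge[OF perm uv] .
  ultimately have "num_orbits (g \<circ> transpose u v) X = Suc (num_orbits g X)"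
    using num_orbits_transpose_split[of g X u v] X(1,3) uv(1) by blast
  then show ?thesis using \<open>g \<circ> transpose u v = f\<close> unfolding g_def by simp
qed

lemma card_eq_sum_card_orbits:
  assumes perm: "permutation f" and X: "finite X" "f ` X \<subseteq> X"
  shows "card X = (\<Sum>S\<in>orbit f ` X. card S)"
proof -
  have "\<Union>(orbit f ` X) = X"
    using orbit_subset_invariant[OF X(2)] permutation_self_in_orbit[OF perm] by blast
  moreover have "pairwise disjnt (orbit f ` X)"
  proof (rule pairwiseI)
    fix S T assume "S \<in> orbit f ` X" "T \<in> orbit f ` X" "S \<noteq> T"
    then obtain x y where S: "S = orbit f x" and T: "T = orbit f y" by blast
    show "disjnt S T"
      unfolding disjnt_def
    proof (rule equals0I)
      fix z assume "z \<in> S \<inter> T"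
      then have "orbit f z = S" "orbit f z = T"
        unfolding S T by (simp_all add: permutation_orbit_eq[OF perm])
      then show False using \<open>S \<noteq> T\<close> by simp
    qed
  qed
  moreover have "finite S" if S: "S \<in> orbit f ` X" for S
  proof -
    obtain x where "S = orbit f x" using S by blast
    then show ?thesis using finite_orbit[OF permutation_self_in_orbit[OF perm]] by simp
  qed
  ultimately show ?thesis using card_Union_disjoint[of "orbit f ` X"] by simp
qed

lemma num_orbits_mult_le_card:
  assumes "permutation f" "finite X" "f ` X \<subseteq> X" "\<And>x. x \<in> X \<Longrightarrow> m \<le> card (orbit f x)"
  shows "m * num_orbits f X \<le> card X"
proof -
  have "m * num_orbits f X = (\<Sum>S\<in>orbit f ` X. m)" by (simp add: num_orbits_def)
  also have "\<dots> \<le> (\<Sum>S\<in>orbit f ` X. card S)" by (rule sum_mono) (use assms(4) in auto)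
  finally show ?thesis using card_eq_sum_card_orbits[OF assms(1-3)] by simp
qed

lemma card_le_num_orbits_mult:
  assumes "permutation f" "finite X" "f ` X \<subseteq> X" "\<And>x. x \<in> X \<Longrightarrow> card (orbit f x) \<le> m"
  shows "card X \<le> m * num_orbits f X"
proof -
  have "(\<Sum>S\<in>orbit f ` X. card S) \<le> (\<Sum>S\<in>orbit f ` X. m)" by (rule sum_mono) (use assms(4) in auto)
  also have "\<dots> = m * num_orbits f X" by (simp add: num_orbits_def)
  finally show ?thesis using card_eq_sum_card_orbits[OF assms(1-3)] by simp
qed


definition comb_map :: "('d \<Rightarrow> 'd) \<Rightarrow> ('d \<Rightarrow> 'd) \<Rightarrow> 'd set \<Rightarrow> bool" where
  "comb_map s a X \<longleftrightarrow> finite X \<and> permutation s \<and> permutation a \<and> s ` X \<subseteq> X \<and> a ` X \<subseteq> X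
     \<and> (\<forall>w. a (a w) = w)"

lemma comb_mapD:
  assumes "comb_map s a X"
  shows "finite X" "permutation s" "permutation a" "s ` X \<subseteq> X" "a ` X \<subseteq> X" "a (a w) = w"
  using assms unfolding comb_map_def by auto

definition map_links :: "('d \<Rightarrow> 'd) \<Rightarrow> ('d \<Rightarrow> 'd) \<Rightarrow> 'd set \<Rightarrow> 'd rel" where
  "map_links s a X = {(w, s w) | w. w \<in> X} \<union> {(w, a w) | w. w \<in> X}"

definition map_component :: "('d \<Rightarrow> 'd) \<Rightarrow> ('d \<Rightarrow> 'd) \<Rightarrow> 'd set \<Rightarrow> 'd \<Rightarrow> 'd set" where
  "map_component s a X x = {y. (x, y) \<in> (map_links s a X \<union> (map_links s a X)\<inverse>)\<^sup>*}"

definition num_map_components :: "('d \<Rightarrow> 'd) \<Rightarrow> ('d \<Rightarrow> 'd) \<Rightarrow> 'd set \<Rightarrow> nat" where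
  "num_map_components s a X = card (map_component s a X ` X)"

text \<open>Vertices, edges and faces are the orbits of \<open>s\<close>, \<open>a\<close> and \<open>s \<circ> a\<close>. When \<open>a\<close> has no fixed
  points, \<open>card X = 2 E\<close>, so this is \<open>2 c - (V - E + F)\<close>, twice the genus of the map.\<close>

definition euler_genus :: "('d \<Rightarrow> 'd) \<Rightarrow> ('d \<Rightarrow> 'd) \<Rightarrow> 'd set \<Rightarrow> int" where
  "euler_genus s a X = int (card X) + 2 * int (num_map_components s a X)
     - int (num_orbits s X) - int (num_orbits a X) - int (num_orbits (s \<circ> a) X)"

lemma in_map_component_self [simp]: "x \<in> map_component s a X x"
  unfolding map_component_def by simp

lemma map_component_sym:
  assumes "y \<in> map_component s a X x"
  shows "x \<in> map_component s a X y"
proof -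
  have "sym ((map_links s a X \<union> (map_links s a X)\<inverse>)\<^sup>*)"
    by (intro sym_rtrancl sym_Un_converse)
  then show ?thesis using assms unfolding map_component_def by (auto dest: symD)
qed

lemma map_component_trans:
  "y \<in> map_component s a X x \<Longrightarrow> z \<in> map_component s a X y \<Longrightarrow> z \<in> map_component s a X x"
  unfolding map_component_def by (auto intro: rtrancl_trans)

lemma map_component_eq:
  assumes "y \<in> map_component s a X x"
  shows "map_component s a X y = map_component s a X x"
proof (intro equalityI subsetI)
  fix z assume "z \<in> map_component s a X y"
  then show "z \<in> map_component s a X x" using assms by (rule map_component_trans[rotated])
next
  fix z assume "z \<in> map_component s a X x"
  then show "z \<in> map_component s a X y" using map_component_sym[OF assms] by (rule map_component_trans[rotated])
qed

lemma map_component_link: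
  "(p, q) \<in> map_links s a X \<union> (map_links s a X)\<inverse> \<Longrightarrow> p \<in> map_component s a X x
     \<Longrightarrow> q \<in> map_component s a X x"
  unfolding map_component_def by (auto intro: rtrancl_into_rtrancl)

lemma map_component_step_s:
  assumes "w \<in> X"
  shows "s w \<in> map_component s a X x \<longleftrightarrow> w \<in> map_component s a X x"
proof -
  have "(w, s w) \<in> map_links s a X" using assms unfolding map_links_def by blast
  then have "(w, s w) \<in> map_links s a X \<union> (map_links s a X)\<inverse>"
    "(s w, w) \<in> map_links s a X \<union> (map_links s a X)\<inverse>" by auto
  then show ?thesis using map_component_link by metis
qed

lemma map_component_step_a:
  assumes "w \<in> X"
  shows "a w \<in> map_component s a X x \<longleftrightarrow> w \<in> map_component s a X x"
proof -
  have "(w, a w) \<in> map_links s a X" using assms unfolding map_links_def by blast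
  then have "(w, a w) \<in> map_links s a X \<union> (map_links s a X)\<inverse>"
    "(a w, w) \<in> map_links s a X \<union> (map_links s a X)\<inverse>" by auto
  then show ?thesis using map_component_link by metis
qed

lemma map_links_cases:
  assumes "(p, q) \<in> map_links s a X \<union> (map_links s a X)\<inverse>"
  obtains w where "w \<in> X" "p = w \<and> q = s w \<or> q = w \<and> p = s w"
    | w where "w \<in> X" "p = w \<and> q = a w \<or> q = w \<and> p = a w"
  using assms unfolding map_links_def by blast

lemma map_component_induct [consumes 1, case_names base link]:
  assumes "y \<in> map_component s a X x" "P x"
    and "\<And>p q. P p \<Longrightarrow> (p, q) \<in> map_links s a X \<union> (map_links s a X)\<inverse> \<Longrightarrow> P q"
  shows "P y"
proof -
  have "(x, y) \<in> (map_links s a X \<union> (map_links s a X)\<inverse>)\<^sup>*"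
    using assms(1) unfolding map_component_def by simp
  then show ?thesis by induction (use assms(2,3) in blast)+
qed

lemma map_component_subset:
  assumes "\<And>p q. (p, q) \<in> map_links s a X \<Longrightarrow> q \<in> map_component s' a' X' p"
  shows "map_component s a X x \<subseteq> map_component s' a' X' x"
proof
  fix y assume "y \<in> map_component s a X x"
  then show "y \<in> map_component s' a' X' x"
  proof (induction rule: map_component_induct)
    case base then show ?case by simp
  next
    case (link p q)
    then consider "(p, q) \<in> map_links s a X" | "(q, p) \<in> map_links s a X" by blast
    then have "q \<in> map_component s' a' X' p"
    proof cases
      case 1 then show ?thesis by (rule assms)
    next
      case 2 show ?thesis by (rule map_component_sym[OF assms[OF 2]])
    qed
    then show ?case by (rule map_component_trans[OF link(1)])
  qed
qed

lemma map_component_subset_carrier: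
  assumes "s ` X \<subseteq> X" "a ` X \<subseteq> X" "x \<in> X"
  shows "map_component s a X x \<subseteq> X"
proof
  fix y assume "y \<in> map_component s a X x"
  then show "y \<in> X"
  proof (induction rule: map_component_induct)
    case (link p q)
    from link(2) show ?case by (cases rule: map_links_cases) (use assms(1,2) link(1) in auto)
  qed (rule assms(3))
qed

lemma orbit_subset_map_component:
  assumes "f ` X \<subseteq> X" "x \<in> X" "\<And>w. w \<in> X \<Longrightarrow> f w \<in> map_component s a X w"
  shows "orbit f x \<subseteq> map_component s a X x"
proof
  fix y assume "y \<in> orbit f x"
  then show "y \<in> map_component s a X x"
  proof induct
    case base then show ?case using assms(2,3) by blast
  next
    case (step y)
    then have "y \<in> X" using orbit_subset_invariant[OF assms(1,2)] by blast
    then have "f y \<in> map_component s a X y" by (rule assms(3))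
    then show ?case by (rule map_component_trans[OF step(2)])
  qed
qed


lemma map_component_split_subset:
  assumes u: "u \<in> X" and sX: "s ` X \<subseteq> X"
  shows "map_component (s \<circ> transpose u (s u)) a X x \<subseteq> map_component s a X x"
proof (rule map_component_subset)
  fix p q assume "(p, q) \<in> map_links (s \<circ> transpose u (s u)) a X"
  then obtain w where w: "w \<in> X" "p = w" "q = s (transpose u (s u) w) \<or> q = a w"
    unfolding map_links_def by auto
  have "s w \<in> map_component s a X w" "a w \<in> map_component s a X w"
    using map_component_step_s[OF w(1)] map_component_step_a[OF w(1)] by auto
  moreover have "s (s u) \<in> map_component s a X u"
    using map_component_step_s[of "s u" X s a u] map_component_step_s[OF u, of s a u] sX u by auto
  ultimately show "q \<in> map_component s a X p"
    using w by (cases "w = u"; cases "w = s u") auto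
qed

lemma map_component_split_connected:
  assumes u: "u \<in> X" and sX: "s ` X \<subseteq> X"
    and connected: "s u \<in> map_component (s \<circ> transpose u (s u)) a X u"
  shows "map_component (s \<circ> transpose u (s u)) a X x = map_component s a X x"
proof
  let ?s = "s \<circ> transpose u (s u)"
  show "map_component ?s a X x \<subseteq> map_component s a X x"
    using map_component_split_subset u sX .
  show "map_component s a X x \<subseteq> map_component ?s a X x"
  proof (rule map_component_subset)
    fix p q assume "(p, q) \<in> map_links s a X"
    then obtain w where w: "w \<in> X" "p = w" "q = s w \<or> q = a w"
      unfolding map_links_def by auto
    have "?s w \<in> map_component ?s a X w" "a w \<in> map_component ?s a X w"
      using map_component_step_s[OF w(1), of ?s a w] map_component_step_a[OF w(1), of a ?s w]
      by simp_all
    moreover have "s (s u) \<in> map_component ?s a X (s u)"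
    proof -
      have "?s u \<in> map_component ?s a X u" using map_component_step_s[OF u, of ?s a u] by simp
      then show ?thesis using map_component_eq[OF connected] by simp
    qed
    moreover have "u \<in> map_component ?s a X (s u)" using map_component_sym[OF connected] .
    ultimately show "q \<in> map_component ?s a X p"
      using w connected by (cases "w = u"; cases "w = s u") auto
  qed
qed

lemma map_links_split_transfer:
  assumes "(p, q) \<in> map_links s a X \<union> (map_links s a X)\<inverse>" "q \<notin> {u, s u, s (s u)}"
  shows "(p, q) \<in> map_links (s \<circ> transpose u (s u)) a X \<union> (map_links (s \<circ> transpose u (s u)) a X)\<inverse>"
  using assms(1)
proof (cases rule: map_links_cases)
  case (1 w)
  then have "(s \<circ> transpose u (s u)) w = s w" using assms(2) by (auto simp: transpose_def)
  then show ?thesis using 1 unfolding map_links_def by auto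
next
  case (2 w)
  then show ?thesis unfolding map_links_def by auto
qed

lemma map_component_split_outside:
  assumes u: "u \<in> X" and sX: "s ` X \<subseteq> X" and x: "x \<notin> map_component s a X u"
  shows "map_component (s \<circ> transpose u (s u)) a X x = map_component s a X x"
proof
  let ?s = "s \<circ> transpose u (s u)"
  show "map_component ?s a X x \<subseteq> map_component s a X x"
    using map_component_split_subset u sX .
  have u_in: "u \<in> map_component s a X u" "s u \<in> map_component s a X u"
    "s (s u) \<in> map_component s a X u"
    using map_component_step_s[of u X s a u] map_component_step_s[of "s u" X s a u] u sX by auto
  show "map_component s a X x \<subseteq> map_component ?s a X x"
  proof
    fix y assume "y \<in> map_component s a X x"
    then have "y \<in> map_component ?s a X x \<and> y \<notin> map_component s a X u"
    proof (induction rule: map_component_induct)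
      case base then show ?case using x by simp
    next
      case (link p q)
      have "q \<notin> map_component s a X u"
        using link map_component_link[of q p s a X u] by blast
      moreover have "(p, q) \<in> map_links ?s a X \<union> (map_links ?s a X)\<inverse>"
        by (rule map_links_split_transfer) (use link u_in \<open>q \<notin> _\<close> in auto)
      then have "q \<in> map_component ?s a X x"
        using link(1) by (blast intro: map_component_link)
      ultimately show ?case by blast
    qed
    then show "y \<in> map_component ?s a X x" ..
  qed
qed

lemma map_component_split_inside:
  assumes u: "u \<in> X" and x: "x \<in> map_component s a X u"
  shows "map_component (s \<circ> transpose u (s u)) a X x = map_component (s \<circ> transpose u (s u)) a X u
       \<or> map_component (s \<circ> transpose u (s u)) a X x = map_component (s \<circ> transpose u (s u)) a X (s u)"
proof -
  let ?s = "s \<circ> transpose u (s u)"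
  have ssu: "s (s u) \<in> map_component ?s a X u"
    using map_component_step_s[of u X ?s a u] u by simp
  from x have "x \<in> map_component ?s a X u \<or> x \<in> map_component ?s a X (s u)"
  proof (induction rule: map_component_induct)
    case base then show ?case by simp
  next
    case (link p q)
    show ?case
    proof (cases "q \<in> {u, s u, s (s u)}")
      case True
      then consider "q = u" | "q = s u" | "q = s (s u)" by blast
      then show ?thesis using ssu in_map_component_self[of u] in_map_component_self[of "s u"]
        by cases blast+
    next
      case False
      have "(p, q) \<in> map_links ?s a X \<union> (map_links ?s a X)\<inverse>"
        using link(2) False by (rule map_links_split_transfer)
      then show ?thesis using link(1) map_component_link[of p q ?s a X] by blast
    qed
  qed
  then show ?thesis
  proof
    assume "x \<in> map_component ?s a X u"
    then show ?thesis by (rule disjI1[OF map_component_eq])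
  next
    assume "x \<in> map_component ?s a X (s u)"
    then show ?thesis by (rule disjI2[OF map_component_eq])
  qed
qed

lemma num_map_components_split_le:
  assumes X: "finite X" and u: "u \<in> X" and sX: "s ` X \<subseteq> X"
  shows "num_map_components (s \<circ> transpose u (s u)) a X \<le> Suc (num_map_components s a X)"
proof -
  let ?s = "s \<circ> transpose u (s u)"
  let ?C = "map_component s a X u"
  define R where "R = map_component s a X ` X - {?C}"
  have sub: "map_component ?s a X ` X
      \<subseteq> insert (map_component ?s a X u) (insert (map_component ?s a X (s u)) R)"
  proof
    fix S assume "S \<in> map_component ?s a X ` X"
    then obtain x where x: "x \<in> X" "S = map_component ?s a X x" by (rule imageE)
    show "S \<in> insert (map_component ?s a X u) (insert (map_component ?s a X (s u)) R)"
    proof (cases "x \<in> ?C")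
      case True
      then have "S = map_component ?s a X u \<or> S = map_component ?s a X (s u)"
        using map_component_split_inside[OF u True] x(2) by simp
      then show ?thesis by blast
    next
      case False
      then have "map_component s a X x \<noteq> ?C" using in_map_component_self[of x s a X] by blast
      then have "map_component s a X x \<in> R" unfolding R_def using x(1) by blast
      moreover have "S = map_component s a X x"
        using map_component_split_outside[OF u sX False] x(2) by simp
      ultimately show ?thesis by blast
    qed
  qed
  have "finite R" using X unfolding R_def by simp
  have "num_map_components ?s a X
      \<le> card (insert (map_component ?s a X u) (insert (map_component ?s a X (s u)) R))"
    unfolding num_map_components_def using sub \<open>finite R\<close> by (simp add: card_mono)
  also have "\<dots> \<le> Suc (Suc (card R))"
    using \<open>finite R\<close> by (simp add: card_insert_if)
  also have "card R = num_map_components s a X - 1"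
    unfolding R_def num_map_components_def using X u by simp
  also have "Suc (Suc (num_map_components s a X - 1)) = Suc (num_map_components s a X)"
  proof -
    have "map_component s a X ` X \<noteq> {}" "finite (map_component s a X ` X)" using X u by auto
    then show ?thesis unfolding num_map_components_def by (simp add: card_gt_0_iff Suc_diff_1)
  qed
  finally show ?thesis .
qed


lemma comb_map_split:
  assumes "comb_map s a X" "u \<in> X"
  shows "comb_map (s \<circ> transpose u (s u)) a X"
  using assms unfolding comb_map_def
  by (auto simp: permutation_compose permutation_swap_id transpose_def image_subset_iff)

lemma face_perm_split:
  assumes "\<forall>w. a (a w) = w"
  shows "(s \<circ> transpose u (s u)) \<circ> a = (s \<circ> a) \<circ> transpose (a u) (a (s u))"
proof
  fix w
  have "a w = u \<longleftrightarrow> w = a u" "a w = s u \<longleftrightarrow> w = a (s u)" using assms by metis+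
  then show "((s \<circ> transpose u (s u)) \<circ> a) w = ((s \<circ> a) \<circ> transpose (a u) (a (s u))) w"
    using assms by (auto simp: transpose_def)
qed

text \<open>Splitting \<open>s u\<close> off the vertex of \<open>u\<close> adds a vertex, merges or splits a face, and
  disconnects the map at most once; so the Euler genus drops by \<open>0\<close> or \<open>2\<close>.\<close>

lemma euler_genus_split:
  assumes map: "comb_map s a X" and u: "u \<in> X" "s u \<noteq> u"
  shows "euler_genus (s \<circ> transpose u (s u)) a X \<le> euler_genus s a X"
    "even (euler_genus s a X - euler_genus (s \<circ> transpose u (s u)) a X)"
proof -
  let ?v = "s u"
  let ?s = "s \<circ> transpose u ?v"
  let ?f = "s \<circ> a" and ?f' = "?s \<circ> a"
  have X: "finite X" and perm_s: "permutation s" and perm_a: "permutation a"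
    and sX: "s ` X \<subseteq> X" and aX: "a ` X \<subseteq> X" and inv: "\<forall>w. a (a w) = w"
    using map unfolding comb_map_def by auto
  have vX: "?v \<in> X" using u sX by blast
  have auX: "a u \<in> X" "a ?v \<in> X" using u vX aX by auto
  have "a u \<noteq> a ?v" using inv u(2) by metis
  have map': "comb_map ?s a X" using comb_map_split[OF map u(1)] .
  then have perm_f': "permutation ?f'" and f'X: "?f' ` X \<subseteq> X"
    unfolding comb_map_def by (auto simp: permutation_compose image_subset_iff)
  have perm_f: "permutation ?f" and fX: "?f ` X \<subseteq> X"
    using perm_s perm_a sX aX by (auto simp: permutation_compose image_subset_iff)
  have f'_eq: "?f' = ?f \<circ> transpose (a u) (a ?v)" using face_perm_split[OF inv] .
  then have f_eq: "?f = ?f' \<circ> transpose (a u) (a ?v)" by (simp add: fun_eq_iff)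
  have vertices: "num_orbits ?s X = Suc (num_orbits s X)"
    using num_orbits_transpose_split[OF perm_s X sX u(1)] u(2)
      permutation_funpow_in_orbit[OF perm_s, of 1 u] by simp
  have "euler_genus ?s a X \<le> euler_genus s a X \<and> even (euler_genus s a X - euler_genus ?s a X)"
  proof (cases "?v \<in> map_component ?s a X u")
    case True
    then have "map_component ?s a X = map_component s a X"
      using map_component_split_connected[OF u(1) sX] by blast
    then have "num_map_components ?s a X = num_map_components s a X"
      unfolding num_map_components_def by simp
    moreover have "num_orbits ?f' X = Suc (num_orbits ?f X) \<or> num_orbits ?f X = Suc (num_orbits ?f' X)"
    proof (cases "a ?v \<in> orbit ?f (a u)")
      case True
      then show ?thesis unfolding f'_eq
        using num_orbits_transpose_split[OF perm_f X fX auX(1) \<open>a u \<noteq> a ?v\<close>] by simp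
    next
      case False
      then show ?thesis unfolding f'_eq
        using num_orbits_transpose_merge[OF perm_f X fX auX \<open>a u \<noteq> a ?v\<close>] by simp
    qed
    ultimately have "euler_genus s a X - euler_genus ?s a X = 2 \<or> euler_genus s a X - euler_genus ?s a X = 0"
      using vertices unfolding euler_genus_def by auto
    then show ?thesis by (metis dual_order.eq_iff even_numeral even_zero diff_ge_0_iff_ge zero_le_numeral)
  next
    case False
    have "orbit ?f' (a u) \<subseteq> map_component ?s a X (a u)"
    proof (rule orbit_subset_map_component[OF f'X auX(1)])
      fix w assume w: "w \<in> X"
      then have "a w \<in> X" using aX by blast
      have "a w \<in> map_component ?s a X w"
        using map_component_step_a[OF w, of a ?s w] by simp
      moreover have "?s (a w) \<in> map_component ?s a X (a w)"
        using map_component_step_s[OF \<open>a w \<in> X\<close>, of ?s a "a w"] by simp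
      ultimately have "?s (a w) \<in> map_component ?s a X w" by (rule map_component_trans)
      then show "?f' w \<in> map_component ?s a X w" by (simp only: o_apply)
    qed
    moreover have "map_component ?s a X (a u) = map_component ?s a X u"
    proof (rule map_component_eq)
      show "a u \<in> map_component ?s a X u" using map_component_step_a[OF u(1), of a ?s u] by simp
    qed
    ultimately have "a ?v \<notin> orbit ?f' (a u)"
      using False map_component_step_a[OF vX, of a ?s u] by blast
    then have "num_orbits ?f' X = Suc (num_orbits ?f X)"
      using num_orbits_transpose_merge[OF perm_f' X f'X auX \<open>a u \<noteq> a ?v\<close>] f_eq by simp
    moreover have "num_map_components ?s a X \<le> Suc (num_map_components s a X)"
      using num_map_components_split_le[OF X u(1) sX] .
    ultimately have "euler_genus s a X - euler_genus ?s a X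
        = 2 * (1 + int (num_map_components s a X) - int (num_map_components ?s a X))"
      "int (num_map_components ?s a X) \<le> 1 + int (num_map_components s a X)"
      using vertices unfolding euler_genus_def by simp_all
    then show ?thesis by simp
  qed
  then show "euler_genus ?s a X \<le> euler_genus s a X"
    "even (euler_genus s a X - euler_genus ?s a X)" by auto
qed


lemma euler_genus_fixed_vertices:
  assumes map: "comb_map s a X" and fixed: "\<forall>x\<in>X. s x = x"
  shows "euler_genus s a X = 0"
proof -
  have aX: "a ` X \<subseteq> X" and perm_a: "permutation a" and inv: "\<forall>w. a (a w) = w"
    using map unfolding comb_map_def by auto
  have "orbit s x = {x}" if "x \<in> X" for x
    using fixed that by (simp add: orbit_eq_singleton_iff)
  then have "orbit s ` X = (\<lambda>x. {x}) ` X" by (rule image_cong[OF refl])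
  then have vertices: "num_orbits s X = card X"
    unfolding num_orbits_def by (simp add: card_image)
  have faces: "orbit (s \<circ> a) x = orbit a x" if "x \<in> X" for x
  proof (rule orbit_cong)
    show "x \<in> orbit a x" using permutation_self_in_orbit[OF perm_a] .
    fix y assume "y \<in> orbit a x"
    then have "a y \<in> X" using orbit_subset_invariant[OF aX \<open>x \<in> X\<close>] aX by blast
    then show "(s \<circ> a) y = a y" using fixed by simp
  qed
  have components: "map_component s a X x = orbit a x" if x: "x \<in> X" for x
  proof
    have "a w \<in> map_component s a X w" if "w \<in> X" for w
      using map_component_step_a[OF that, of a s w] by simp
    then show "orbit a x \<subseteq> map_component s a X x"
      by (rule orbit_subset_map_component[OF aX x])
    show "map_component s a X x \<subseteq> orbit a x"
    proof
      fix y assume "y \<in> map_component s a X x"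
      then show "y \<in> orbit a x"
      proof (induction rule: map_component_induct)
        case base then show ?case using permutation_self_in_orbit[OF perm_a] .
      next
        case (link p q)
        from link(2) have "q = p \<or> q = a p"
          by (cases rule: map_links_cases) (use fixed inv in auto)
        then show ?case
        proof
          assume "q = a p" then show ?case using orbit.step[OF link(1)] by simp
        qed (use link(1) in simp)
      qed
    qed
  qed
  have "num_orbits (s \<circ> a) X = num_orbits a X" "num_map_components s a X = num_orbits a X"
    unfolding num_orbits_def num_map_components_def using faces components
    by (simp_all cong: image_cong)
  then show ?thesis unfolding euler_genus_def using vertices by simp
qed

theorem euler_genus_nonneg_even:
  assumes "comb_map s a X"
  shows "0 \<le> euler_genus s a X \<and> even (euler_genus s a X)"
  using assms
proof (induction "card {x \<in> X. s x \<noteq> x}" arbitrary: s rule: less_induct)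
  case less
  show ?case
  proof (cases "\<forall>x\<in>X. s x = x")
    case True
    then show ?thesis using euler_genus_fixed_vertices[OF less.prems] by simp
  next
    case False
    then obtain u where u: "u \<in> X" "s u \<noteq> u" by blast
    let ?s = "s \<circ> transpose u (s u)"
    have X: "finite X" and perm_s: "permutation s" and sX: "s ` X \<subseteq> X"
      using less.prems unfolding comb_map_def by auto
    have "inj s" using perm_s by (simp add: permutation_bijective bij_is_inj)
    then have "s (s u) \<noteq> s u" using u(2) by (simp add: inj_eq)
    then have "{x \<in> X. ?s x \<noteq> x} \<subset> {x \<in> X. s x \<noteq> x}"
      using u sX by (auto simp: transpose_def)
    then have "card {x \<in> X. ?s x \<noteq> x} < card {x \<in> X. s x \<noteq> x}"
      using X by (simp add: psubset_card_mono)
    then have "0 \<le> euler_genus ?s a X \<and> even (euler_genus ?s a X)"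
      using less.hyps comb_map_split[OF less.prems u(1)] by blast
    then show ?thesis
      using euler_genus_split[OF less.prems u] by presburger
  qed
qed


corollary euler_genus_eq_twice:
  assumes "comb_map s a X"
  obtains g :: nat where "euler_genus s a X = 2 * int g"
proof -
  obtain k where k: "euler_genus s a X = 2 * k" using euler_genus_nonneg_even[OF assms] by blast
  then have "k \<ge> 0" using euler_genus_nonneg_even[OF assms] by simp
  then show thesis using that[of "nat k"] k by simp
qed

lemma card_image_partition:
  assumes X: "finite X" "K \<subseteq> X" and self: "\<And>x. x \<in> X \<Longrightarrow> x \<in> F x"
    and inside: "\<And>x. x \<in> K \<Longrightarrow> F x \<subseteq> K" and outside: "\<And>x. x \<in> X - K \<Longrightarrow> F x \<subseteq> X - K"
  shows "card (F ` X) = card (F ` K) + card (F ` (X - K))"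
proof -
  have "F ` X = F ` K \<union> F ` (X - K)" using X(2) by blast
  moreover have "F ` K \<inter> F ` (X - K) = {}"
  proof (rule equals0I)
    fix S assume "S \<in> F ` K \<inter> F ` (X - K)"
    then obtain x y where "x \<in> K" "y \<in> X - K" "S = F x" "S = F y" by (elim IntE imageE) blast
    moreover from this have "y \<in> F y" using self by blast
    ultimately have "y \<in> F x" by simp
    then show False using inside \<open>x \<in> K\<close> \<open>y \<in> X - K\<close> by blast
  qed
  ultimately show ?thesis using X by (simp add: card_Un_disjoint finite_subset)
qed

lemma permutation_invariant_diff:
  assumes "permutation f" "finite X" "f ` X \<subseteq> X" "K \<subseteq> X" "f ` K \<subseteq> K"
  shows "f ` (X - K) \<subseteq> X - K"
proof -
  have "inj f" using assms(1) by (simp add: permutation_bijective bij_is_inj)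
  then have "f ` X = X" "f ` K = K"
    using endo_inj_surj assms(2-5) finite_subset inj_on_subset by (metis subset_UNIV)+
  then show ?thesis using image_set_diff[OF \<open>inj f\<close>] by simp
qed

lemma map_component_restrict:
  assumes Y: "Y \<subseteq> X" "s ` Y \<subseteq> Y" "a ` Y \<subseteq> Y" "s ` (X - Y) \<subseteq> X - Y" "a ` (X - Y) \<subseteq> X - Y"
    and y: "y \<in> Y"
  shows "map_component s a X y = map_component s a Y y" "map_component s a Y y \<subseteq> Y"
proof -
  have inside: "z \<in> map_component s a Y y \<and> z \<in> Y" if "z \<in> map_component s a X y" for z
    using that
  proof (induction rule: map_component_induct)
    case base then show ?case using y by simp
  next
    case (link p q)
    from link(2) have "(p, q) \<in> map_links s a Y \<union> (map_links s a Y)\<inverse> \<and> q \<in> Y"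
    proof (cases rule: map_links_cases)
      case (1 w)
      then have "w \<in> Y" using link(1) Y(4) by blast
      then show ?thesis using 1 Y(2) unfolding map_links_def by blast
    next
      case (2 w)
      then have "w \<in> Y" using link(1) Y(5) by blast
      then show ?thesis using 2 Y(3) unfolding map_links_def by blast
    qed
    then show ?case using link(1) map_component_link[of p q s a Y y] by blast
  qed
  have "map_component s a Y y \<subseteq> map_component s a X y"
  proof (rule map_component_subset)
    fix p q assume "(p, q) \<in> map_links s a Y"
    then have "(p, q) \<in> map_links s a X" using Y(1) unfolding map_links_def by blast
    then show "q \<in> map_component s a X p" using map_component_link[of p q s a X p] by simp
  qed
  then show "map_component s a X y = map_component s a Y y" "map_component s a Y y \<subseteq> Y"
    using inside by blast+
qed

lemma euler_genus_add:
  assumes map: "comb_map s a X" and K: "K \<subseteq> X" "s ` K \<subseteq> K" "a ` K \<subseteq> K"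
  shows "euler_genus s a X = euler_genus s a K + euler_genus s a (X - K)"
    and "comb_map s a K" and "comb_map s a (X - K)"
proof -
  have X: "finite X" and perm_s: "permutation s" and perm_a: "permutation a"
    and sX: "s ` X \<subseteq> X" and aX: "a ` X \<subseteq> X"
    using map unfolding comb_map_def by auto
  have sD: "s ` (X - K) \<subseteq> X - K" and aD: "a ` (X - K) \<subseteq> X - K"
    using permutation_invariant_diff[OF perm_s X sX K(1,2)]
      permutation_invariant_diff[OF perm_a X aX K(1,3)] by simp_all
  have orbits: "num_orbits f X = num_orbits f K + num_orbits f (X - K)"
    if f: "permutation f" "f ` K \<subseteq> K" "f ` (X - K) \<subseteq> X - K" for f
    unfolding num_orbits_def
  proof (rule card_image_partition[OF X K(1)])
    show "x \<in> orbit f x" for x by (rule permutation_self_in_orbit[OF f(1)])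
    show "orbit f x \<subseteq> K" if "x \<in> K" for x by (rule orbit_subset_invariant[OF f(2) that])
    show "orbit f x \<subseteq> X - K" if "x \<in> X - K" for x by (rule orbit_subset_invariant[OF f(3) that])
  qed
  have "(s \<circ> a) ` K \<subseteq> K" "(s \<circ> a) ` (X - K) \<subseteq> X - K"
    using K sD aD by (auto simp: image_subset_iff)
  note orbits_sa = orbits[OF permutation_compose[OF perm_s perm_a] this]
  have XK: "X - (X - K) = K" using K(1) by blast
  have restrict_K: "map_component s a X x = map_component s a K x" "map_component s a K x \<subseteq> K"
    if "x \<in> K" for x
    using map_component_restrict[OF K sD aD that] by auto
  have restrict_D: "map_component s a X x = map_component s a (X - K) x"
    "map_component s a (X - K) x \<subseteq> X - K" if "x \<in> X - K" for x
    using map_component_restrict[of "X - K" X s a x] sD aD K that XK by auto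
  have "num_map_components s a X
      = card (map_component s a X ` K) + card (map_component s a X ` (X - K))"
    unfolding num_map_components_def
  proof (rule card_image_partition[OF X K(1)])
    show "map_component s a X x \<subseteq> K" if "x \<in> K" for x using restrict_K[OF that] by simp
    show "map_component s a X x \<subseteq> X - K" if "x \<in> X - K" for x using restrict_D[OF that] by simp
  qed simp
  also have "map_component s a X ` K = map_component s a K ` K"
    using restrict_K(1) by (rule image_cong[OF refl])
  also have "map_component s a X ` (X - K) = map_component s a (X - K) ` (X - K)"
    using restrict_D(1) by (rule image_cong[OF refl])
  finally have "num_map_components s a X = num_map_components s a K + num_map_components s a (X - K)"
    unfolding num_map_components_def .
  moreover have "card X = card K + card (X - K)"
    using X K(1) by (simp add: card_Diff_subset card_mono finite_subset)
  ultimately show "euler_genus s a X = euler_genus s a K + euler_genus s a (X - K)"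
    unfolding euler_genus_def using orbits[OF perm_s K(2) sD] orbits[OF perm_a K(3) aD] orbits_sa
    by simp
  show "comb_map s a K" "comb_map s a (X - K)"
    using map K sD aD finite_subset[OF K(1) X] unfolding comb_map_def by auto
qed


text \<open>Cutting the darts of an \<open>a\<close>-closed set \<open>K\<close> loose from the other darts at their vertices,
  one transposition at a time, does not increase the Euler genus.\<close>

lemma split_off_invariant:
  assumes "comb_map s a X" "K \<subseteq> X" "a ` K \<subseteq> K"
    and "\<forall>w\<in>X. vtx (s w) = vtx w"
    and "\<forall>k\<in>K. \<forall>k'\<in>K. vtx k = vtx k' \<longrightarrow> k' \<in> orbit s k"
  shows "\<exists>s'. comb_map s' a X \<and> euler_genus s' a X \<le> euler_genus s a X \<and> s' ` K \<subseteq> K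
    \<and> (\<forall>w\<in>X. vtx (s' w) = vtx w) \<and> (\<forall>k\<in>K. \<forall>k'\<in>K. vtx k = vtx k' \<longrightarrow> k' \<in> orbit s' k)"
  using assms
proof (induction "card {w \<in> X - K. s w \<noteq> w}" arbitrary: s rule: less_induct)
  case less
  note map = less.prems(1) and K = less.prems(2,3)
    and same_vtx = less.prems(4) and same_orbit = less.prems(5)
  have X: "finite X" and perm_s: "permutation s" and sX: "s ` X \<subseteq> X"
    using map unfolding comb_map_def by auto
  show ?case
  proof (cases "s ` K \<subseteq> K")
    case True
    then show ?thesis using less.prems by blast
  next
    case False
    then obtain k where k: "k \<in> K" "s k \<notin> K" by blast
    define s' where "s' = s \<circ> transpose k (s k)"
    have "k \<in> X" "s k \<in> X" using k K sX by blast+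
    have "s k \<noteq> k" using k by auto
    have map': "comb_map s' a X" unfolding s'_def using comb_map_split[OF map \<open>k \<in> X\<close>] .
    have "permutation s'" using map' unfolding comb_map_def by simp
    have genus': "euler_genus s' a X \<le> euler_genus s a X"
      unfolding s'_def using euler_genus_split(1)[OF map \<open>k \<in> X\<close> \<open>s k \<noteq> k\<close>] .
    have same_vtx': "\<forall>w\<in>X. vtx (s' w) = vtx w"
      using same_vtx \<open>k \<in> X\<close> \<open>s k \<in> X\<close> by (auto simp: s'_def transpose_def)
    have same_orbit': "\<forall>k1\<in>K. \<forall>k2\<in>K. vtx k1 = vtx k2 \<longrightarrow> k2 \<in> orbit s' k1"
    proof (intro ballI impI)
      fix k1 k2 assume k12: "k1 \<in> K" "k2 \<in> K" "vtx k1 = vtx k2"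
      have "k2 \<in> orbit s k1" using same_orbit k12 by blast
      have "s k \<in> orbit s k" using orbit.base .
      note split = orbit_transpose_split[OF perm_s \<open>s k \<noteq> k\<close>[symmetric] this, folded s'_def]
      show "k2 \<in> orbit s' k1"
      proof (cases "k1 \<in> orbit s k")
        case False
        then show ?thesis using split(3) \<open>k2 \<in> orbit s k1\<close> by simp
      next
        case True
        have "orbit s' (s k) = {s k}" by (simp add: s'_def orbit_eq_singleton_iff)
        moreover have "orbit s k1 = orbit s k" using permutation_orbit_eq[OF perm_s True] .
        ultimately have "k1 \<in> orbit s' k \<union> {s k}" "k2 \<in> orbit s' k \<union> {s k}"
          using split(1) True \<open>k2 \<in> orbit s k1\<close> by auto
        then have "k1 \<in> orbit s' k" "k2 \<in> orbit s' k" using k12 k(2) by auto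
        then show ?thesis using permutation_orbit_eq[OF \<open>permutation s'\<close>] by blast
      qed
    qed
    have "s (s k) \<noteq> s k"
      using \<open>s k \<noteq> k\<close> perm_s by (simp add: permutation_bijective bij_is_inj inj_eq)
    then have "{w \<in> X - K. s' w \<noteq> w} \<subset> {w \<in> X - K. s w \<noteq> w}"
      using k \<open>s k \<in> X\<close> by (auto simp: s'_def transpose_def)
    then have "card {w \<in> X - K. s' w \<noteq> w} < card {w \<in> X - K. s w \<noteq> w}"
      using X by (simp add: psubset_card_mono)
    then obtain s'' where "comb_map s'' a X" "euler_genus s'' a X \<le> euler_genus s' a X"
      "s'' ` K \<subseteq> K" "\<forall>w\<in>X. vtx (s'' w) = vtx w"
      "\<forall>k\<in>K. \<forall>k'\<in>K. vtx k = vtx k' \<longrightarrow> k' \<in> orbit s'' k"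
      using less.hyps[OF _ map' K same_vtx' same_orbit'] by blast
    then show ?thesis using genus' by (meson order_trans)
  qed
qed

lemma card_eq_twice_num_orbits_involution:
  assumes perm: "permutation a" and X: "finite X" "a ` X \<subseteq> X"
    and involution: "\<And>x. x \<in> X \<Longrightarrow> a (a x) = x \<and> a x \<noteq> x"
  shows "card X = 2 * num_orbits a X"
proof -
  have "card (orbit a x) = 2" if "x \<in> X" for x
  proof -
    have "least_power a x \<le> 2"
      using involution[OF that] by (intro least_power_le) (simp_all add: numeral_2_eq_2)
    moreover have "least_power a x > 1" using least_power_gt_one[OF perm] involution[OF that] by simp
    ultimately show ?thesis using card_orbit_eq_least_power[OF perm] by simp
  qed
  then show ?thesis
    using num_orbits_mult_le_card[OF perm X, of 2] card_le_num_orbits_mult[OF perm X, of 2] by simp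
qed

text \<open>If every vertex and every face has degree at least \<open>4\<close> on average, then \<open>V \<le> E/2\<close> and
  \<open>F \<le> E/2\<close>, so \<open>V - E + F \<le> 0 < 2 c\<close>.\<close>

lemma euler_genus_ge_2:
  assumes map: "comb_map s a X" and "X \<noteq> {}"
    and vertices: "4 * num_orbits s X \<le> card X"
    and no_loops: "\<And>x. x \<in> X \<Longrightarrow> a x \<noteq> x"
    and faces: "\<And>x. x \<in> X \<Longrightarrow> 4 \<le> card (orbit (s \<circ> a) x)"
  shows "2 \<le> euler_genus s a X"
proof -
  have X: "finite X" and perm_s: "permutation s" and perm_a: "permutation a"
    and sX: "s ` X \<subseteq> X" and aX: "a ` X \<subseteq> X" and inv: "\<forall>w. a (a w) = w"
    using map unfolding comb_map_def by auto
  have "card X = 2 * num_orbits a X"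
    using card_eq_twice_num_orbits_involution[OF perm_a X aX] inv no_loops by blast
  moreover have "4 * num_orbits (s \<circ> a) X \<le> card X"
    using num_orbits_mult_le_card[OF permutation_compose[OF perm_s perm_a] X] sX aX faces
    by (auto simp: image_subset_iff)
  moreover have "1 \<le> num_map_components s a X"
    using X \<open>X \<noteq> {}\<close> unfolding num_map_components_def by (simp add: Suc_leI card_gt_0_iff)
  ultimately show ?thesis using vertices unfolding euler_genus_def by linarith
qed

lemma in_darts_iff [simp]: "(q, a, b) \<in> darts Alph Q \<longleftrightarrow> q \<in> Q \<and> a \<in> Alph"
  unfolding darts_def by simp

lemma dart_rev_in_darts: "d \<in> darts Alph Q \<Longrightarrow> dart_rev d \<in> darts Alph Q"
  by (cases d) auto

lemma dart_rev_dart_rev [simp]: "dart_rev (dart_rev d) = d"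
  by (cases d) auto

lemma finite_darts: "finite Alph \<Longrightarrow> finite Q \<Longrightarrow> finite (darts Alph Q)"
  unfolding darts_def by simp

lemma card_darts: "finite Alph \<Longrightarrow> finite Q \<Longrightarrow> card (darts Alph Q) = 2 * (card Q * card Alph)"
  unfolding darts_def by (simp add: card_cartesian_product)

text \<open>The rotation and the dart reversal, made the identity outside the darts so that they are
  permutations of finite support.\<close>

definition vertex_perm :: "'a set \<Rightarrow> nat set \<Rightarrow> (nat \<times> 'a \<times> bool \<Rightarrow> nat \<times> 'a \<times> bool)
    \<Rightarrow> nat \<times> 'a \<times> bool \<Rightarrow> nat \<times> 'a \<times> bool" where
  "vertex_perm Alph Q sigma d = (if d \<in> darts Alph Q then sigma d else d)"

definition edge_perm :: "'a set \<Rightarrow> nat set \<Rightarrow> nat \<times> 'a \<times> bool \<Rightarrow> nat \<times> 'a \<times> bool" where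
  "edge_perm Alph Q d = (if d \<in> darts Alph Q then dart_rev d else d)"

locale dfa_rotation =
  fixes Alph :: "'a set" and Q :: "nat set" and delta :: "nat \<Rightarrow> 'a \<Rightarrow> nat"
    and sigma :: "nat \<times> 'a \<times> bool \<Rightarrow> nat \<times> 'a \<times> bool"
  assumes finite_Alph: "finite Alph" and Alph_nonempty: "Alph \<noteq> {}" and finite_Q: "finite Q"
    and delta_closed: "\<And>q a. q \<in> Q \<Longrightarrow> a \<in> Alph \<Longrightarrow> delta q a \<in> Q"
    and rotation: "rotation_system Alph Q delta sigma"
begin

abbreviation "D \<equiv> darts Alph Q"
abbreviation "s \<equiv> vertex_perm Alph Q sigma"
abbreviation "r \<equiv> edge_perm Alph Q"
abbreviation "vtx \<equiv> dart_vertex delta"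

lemma sigma_bij: "bij_betw sigma D D"
  and vtx_sigma: "d \<in> D \<Longrightarrow> vtx (sigma d) = vtx d"
  and sigma_transitive: "d \<in> D \<Longrightarrow> e \<in> D \<Longrightarrow> vtx d = vtx e \<Longrightarrow> \<exists>n. (sigma ^^ n) d = e"
  using rotation unfolding rotation_system_def by auto

lemma vtx_in_Q: "d \<in> D \<Longrightarrow> vtx d \<in> Q"
  using delta_closed by (cases d) auto

lemma dart_at:
  assumes "q \<in> Q"
  obtains d where "d \<in> D" "vtx d = q"
proof -
  obtain a where "a \<in> Alph" using Alph_nonempty by blast
  then show thesis using that[of "(q, a, True)"] assms by simp
qed

lemma funpow_vertex_perm:
  assumes "d \<in> D"
  shows "(s ^^ n) d = (sigma ^^ n) d \<and> (sigma ^^ n) d \<in> D \<and> vtx ((sigma ^^ n) d) = vtx d"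
proof (induction n)
  case (Suc n)
  then have "sigma ((sigma ^^ n) d) \<in> D" using sigma_bij bij_betwE by blast
  then show ?case using Suc vtx_sigma[of "(sigma ^^ n) d"] by (simp add: vertex_perm_def)
qed (use assms in simp)

lemma comb_map: "comb_map s r D"
proof -
  have fin: "finite D" using finite_darts[OF finite_Alph finite_Q] .
  have "bij_betw s D D"
    using sigma_bij by (rule bij_betw_cong[THEN iffD1, rotated]) (simp add: vertex_perm_def)
  then have "s permutes D" by (rule bij_imp_permutes) (simp add: vertex_perm_def)
  moreover have "bij_betw r D D"
    by (rule bij_betw_byWitness[where f' = r]) (auto simp: edge_perm_def dart_rev_in_darts)
  then have "r permutes D" by (rule bij_imp_permutes) (simp add: edge_perm_def)
  ultimately show ?thesis
    using fin unfolding comb_map_def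
    by (auto simp: permutation_permutes permutes_image edge_perm_def dart_rev_in_darts)
qed

lemma orbit_vertex_perm:
  assumes "d \<in> D"
  shows "orbit s d = {e \<in> D. vtx e = vtx d}"
proof -
  have "permutation s" using comb_map unfolding comb_map_def by simp
  then have "orbit s d = {(sigma ^^ n) d | n. True}"
    using funpow_vertex_perm[OF assms] by (simp add: orbit_altdef_permutation)
  also have "\<dots> = {e \<in> D. vtx e = vtx d}"
  proof (intro equalityI subsetI)
    fix e assume "e \<in> {(sigma ^^ n) d | n. True}"
    then obtain n where "e = (sigma ^^ n) d" by blast
    then show "e \<in> {e \<in> D. vtx e = vtx d}" using funpow_vertex_perm[OF assms, of n] by simp
  next
    fix e assume "e \<in> {e \<in> D. vtx e = vtx d}"
    then have "e \<in> D" "vtx d = vtx e" by auto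
    then obtain n where "(sigma ^^ n) d = e" using sigma_transitive[OF assms] by blast
    then show "e \<in> {(sigma ^^ n) d | n. True}" by blast
  qed
  finally show ?thesis .
qed

lemma num_orbits_vertex_perm: "num_orbits s D = card Q"
proof -
  let ?V = "\<lambda>q. {e \<in> D. vtx e = q}"
  have "orbit s ` D = ?V ` Q"
  proof (intro set_eqI iffI)
    fix S assume "S \<in> orbit s ` D"
    then obtain d where d: "d \<in> D" "S = orbit s d" by (rule imageE)
    then have "S = ?V (vtx d)" using orbit_vertex_perm by simp
    then show "S \<in> ?V ` Q" using vtx_in_Q[OF d(1)] by (rule image_eqI)
  next
    fix S assume "S \<in> ?V ` Q"
    then obtain q where "q \<in> Q" "S = ?V q" by (rule imageE)
    moreover obtain d where "d \<in> D" "vtx d = q" using dart_at[OF \<open>q \<in> Q\<close>] .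
    ultimately have "S = orbit s d" using orbit_vertex_perm by simp
    then show "S \<in> orbit s ` D" using \<open>d \<in> D\<close> by (rule image_eqI)
  qed
  moreover have "inj_on ?V Q"
  proof (rule inj_onI)
    fix q q' assume "q \<in> Q" "q' \<in> Q" and eq: "?V q = ?V q'"
    obtain d where "d \<in> D" "vtx d = q" using dart_at[OF \<open>q \<in> Q\<close>] .
    then have "d \<in> ?V q'" unfolding eq[symmetric] by simp
    then show "q = q'" using \<open>vtx d = q\<close> by simp
  qed
  ultimately show ?thesis unfolding num_orbits_def by (simp add: card_image)
qed

lemma num_orbits_edge_perm: "num_orbits r D = card Q * card Alph"
proof -
  have "permutation r" "finite D" "r ` D \<subseteq> D" "\<forall>w. r (r w) = w"
    using comb_map unfolding comb_map_def by auto
  moreover have "r d \<noteq> d" if "d \<in> D" for d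
    using that by (cases d) (auto simp: edge_perm_def)
  ultimately have "card D = 2 * num_orbits r D"
    by (intro card_eq_twice_num_orbits_involution) auto
  then show ?thesis using card_darts[OF finite_Alph finite_Q] by simp
qed

lemma face_walk_in_darts:
  assumes "d \<in> D"
  shows "((sigma \<circ> dart_rev) ^^ n) d \<in> D"
proof (induction n)
  case (Suc n)
  have "sigma (dart_rev (((sigma \<circ> dart_rev) ^^ n) d)) \<in> D"
    using bij_betwE[OF sigma_bij] dart_rev_in_darts[OF Suc.IH] by blast
  then show ?case unfolding funpow.simps(2) comp_def by simp
qed (use assms in simp)

lemma funpow_face_perm:
  assumes "d \<in> D"
  shows "((s \<circ> r) ^^ n) d = ((sigma \<circ> dart_rev) ^^ n) d"
proof (rule funpow_eq_if_agree)
  fix i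
  have "((sigma \<circ> dart_rev) ^^ i) d \<in> D" using face_walk_in_darts[OF assms] .
  then show "(s \<circ> r) (((sigma \<circ> dart_rev) ^^ i) d) = (sigma \<circ> dart_rev) (((sigma \<circ> dart_rev) ^^ i) d)"
    by (simp add: vertex_perm_def edge_perm_def dart_rev_in_darts)
qed

lemma num_orbits_face_perm: "num_orbits (s \<circ> r) D = num_faces Alph Q delta sigma"
proof -
  have "permutation (s \<circ> r)"
    using comb_map unfolding comb_map_def by (simp add: permutation_compose)
  then have "orbit (s \<circ> r) d = {((sigma \<circ> dart_rev) ^^ n) d | n. True}" if "d \<in> D" for d
    using funpow_face_perm[OF that] by (simp add: orbit_altdef_permutation)
  then have "orbit (s \<circ> r) ` D = (\<lambda>d. {((sigma \<circ> dart_rev) ^^ n) d | n. True}) ` D"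
    by (rule image_cong[OF refl])
  also have "\<dots> = {{((sigma \<circ> dart_rev) ^^ n) d | n. True} | d. d \<in> D}"
    by (simp only: Setcompr_eq_image)
  finally have faces: "orbit (s \<circ> r) ` D = {{((sigma \<circ> dart_rev) ^^ n) d | n. True} | d. d \<in> D}" .
  have no_isolated: "{q \<in> Q. \<forall>d\<in>D. vtx d \<noteq> q} = {}"
  proof (rule equals0I)
    fix q assume q: "q \<in> {q \<in> Q. \<forall>d\<in>D. vtx d \<noteq> q}"
    then obtain d where "d \<in> D" "vtx d = q" using dart_at by blast
    then show False using q by blast
  qed
  show ?thesis unfolding num_orbits_def num_faces_def faces no_isolated by simp
qed

abbreviation "reach \<equiv> (graph_edges Alph Q delta \<union> (graph_edges Alph Q delta)\<inverse>)\<^sup>*"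

lemma reach_closed:
  assumes "(q, q') \<in> reach" "q \<in> Q"
  shows "q' \<in> Q"
  using assms by induction (auto simp: graph_edges_def delta_closed)

lemma same_vertex_same_component:
  assumes "d \<in> D" "e \<in> D" "vtx e = vtx d"
  shows "e \<in> map_component s r D d"
proof -
  have "s w \<in> map_component s r D w" if "w \<in> D" for w
    using map_component_step_s[OF that, of s r w] by simp
  then have "orbit s d \<subseteq> map_component s r D d"
    using comb_map assms(1) unfolding comb_map_def by (intro orbit_subset_map_component) auto
  moreover have "e \<in> orbit s d" using orbit_vertex_perm[OF assms(1)] assms(2,3) by simp
  ultimately show ?thesis by blast
qed

lemma graph_edge_dart:
  assumes "(q, q') \<in> graph_edges Alph Q delta \<union> (graph_edges Alph Q delta)\<inverse>"
  obtains w where "w \<in> D" "vtx w = q" "vtx (dart_rev w) = q'"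
proof -
  from assms obtain p a where "p \<in> Q" "a \<in> Alph"
    "q = p \<and> q' = delta p a \<or> q' = p \<and> q = delta p a"
    unfolding graph_edges_def by blast
  then show thesis using that[of "(p, a, True)"] that[of "(p, a, False)"] by auto
qed

lemma map_component_iff_reach:
  assumes "d \<in> D" "e \<in> D"
  shows "e \<in> map_component s r D d \<longleftrightarrow> (vtx d, vtx e) \<in> reach"
proof
  assume "e \<in> map_component s r D d"
  then have "e \<in> D \<and> (vtx d, vtx e) \<in> reach"
  proof (induction rule: map_component_induct)
    case base then show ?case using assms(1) by simp
  next
    case (link p q)
    from link(2) show ?case
    proof (cases rule: map_links_cases)
      case (1 w)
      then have "s w \<in> D" "vtx (s w) = vtx w"
        using sigma_bij bij_betwE vtx_sigma by (auto simp: vertex_perm_def)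
      then show ?thesis using 1 link(1) by auto
    next
      case (2 w)
      then obtain q0 a b where w: "w = (q0, a, b)" "q0 \<in> Q" "a \<in> Alph" by (cases w) auto
      then have "(vtx w, vtx (dart_rev w)) \<in> graph_edges Alph Q delta \<union> (graph_edges Alph Q delta)\<inverse>"
        unfolding graph_edges_def by (cases b) auto
      then have "(vtx w, vtx (r w)) \<in> reach" "(vtx (r w), vtx w) \<in> reach"
        using 2(1) by (auto simp: edge_perm_def)
      moreover have "r w \<in> D" using 2(1) dart_rev_in_darts by (simp add: edge_perm_def)
      ultimately show ?thesis using 2 link(1) by (auto intro: rtrancl_trans)
    qed
  qed
  then show "(vtx d, vtx e) \<in> reach" ..
next
  assume "(vtx d, vtx e) \<in> reach"
  then have "\<forall>e'\<in>D. vtx e' = vtx e \<longrightarrow> e' \<in> map_component s r D d"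
  proof (induction rule: rtrancl_induct)
    case base
    then show ?case using same_vertex_same_component[OF assms(1)] by simp
  next
    case (step y z)
    obtain w where w: "w \<in> D" "vtx w = y" "vtx (dart_rev w) = z" using graph_edge_dart[OF step(2)] .
    then have "w \<in> map_component s r D d" using step(3) by blast
    then have "r w \<in> map_component s r D d" using map_component_step_a[OF w(1), of r s d] by simp
    moreover have "r w = dart_rev w" "dart_rev w \<in> D"
      using w(1) dart_rev_in_darts[OF w(1)] by (auto simp: edge_perm_def)
    ultimately have rev_w: "dart_rev w \<in> map_component s r D d" "dart_rev w \<in> D" by simp_all
    show ?case
    proof (intro ballI impI)
      fix e' assume "e' \<in> D" "vtx e' = z"
      then have "e' \<in> map_component s r D (dart_rev w)"
        using same_vertex_same_component[OF rev_w(2)] w(3) by simp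
      then show "e' \<in> map_component s r D d" by (rule map_component_trans[OF rev_w(1)])
    qed
  qed
  then show "e \<in> map_component s r D d" using assms(2) by blast
qed

lemma num_map_components: "num_map_components s r D = num_components Alph Q delta"
proof -
  define h where "h S = {e \<in> D. vtx e \<in> S}" for S
  have component: "map_component s r D d = h (reach `` {vtx d})" if "d \<in> D" for d
  proof -
    have "map_component s r D d \<subseteq> D"
      using comb_map that unfolding comb_map_def by (intro map_component_subset_carrier) auto
    then show ?thesis using map_component_iff_reach[OF that] unfolding h_def by auto
  qed
  have "map_component s r D ` D = h ` (Q // reach)"
  proof (intro set_eqI iffI)
    fix S assume "S \<in> map_component s r D ` D"
    then obtain d where "d \<in> D" "S = map_component s r D d" by (rule imageE)
    then have "S = h (reach `` {vtx d})" using component by simp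
    moreover have "reach `` {vtx d} \<in> Q // reach" using vtx_in_Q[OF \<open>d \<in> D\<close>] by (rule quotientI)
    ultimately show "S \<in> h ` (Q // reach)" by (rule image_eqI)
  next
    fix S assume "S \<in> h ` (Q // reach)"
    then obtain q where "q \<in> Q" "S = h (reach `` {q})" by (auto elim!: quotientE)
    moreover obtain d where "d \<in> D" "vtx d = q" using dart_at[OF \<open>q \<in> Q\<close>] .
    ultimately have "S = map_component s r D d" using component by simp
    then show "S \<in> map_component s r D ` D" using \<open>d \<in> D\<close> by (rule image_eqI)
  qed
  moreover have "inj_on h (Q // reach)"
  proof (rule inj_onI)
    fix S T assume "S \<in> Q // reach" "T \<in> Q // reach" and eq: "h S = h T"
    have subset: "U \<subseteq> Q" if "U \<in> Q // reach" for U
      using that reach_closed by (auto elim!: quotientE)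
    have "x \<in> T" if "x \<in> S" "S \<subseteq> Q" "h S = h T" for x S T
    proof -
      have "x \<in> Q" using that(1,2) by blast
      then obtain d where "d \<in> D" "vtx d = x" by (rule dart_at)
      then have "d \<in> h T" using that(1,3) unfolding h_def by auto
      then show ?thesis using \<open>vtx d = x\<close> unfolding h_def by simp
    qed
    then have "S \<subseteq> T" "T \<subseteq> S"
      using subset[OF \<open>S \<in> Q // reach\<close>] subset[OF \<open>T \<in> Q // reach\<close>] eq by auto
    then show "S = T" by (rule subset_antisym)
  qed
  ultimately show ?thesis
    unfolding num_map_components_def num_components_def by (simp add: card_image)
qed

theorem euler_formula:
  "int (card Q) - int (card Q * card Alph) + int (num_faces Alph Q delta sigma)
     = 2 * int (num_components Alph Q delta) - euler_genus s r D"
  unfolding euler_genus_def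
  using num_orbits_vertex_perm num_orbits_edge_perm num_orbits_face_perm num_map_components
    card_darts[OF finite_Alph finite_Q] by simp

end

lemma dfa_rotationI:
  assumes "is_dfa Alph Q q0 F delta" "Alph \<noteq> {}" "rotation_system Alph Q delta sigma"
  shows "dfa_rotation Alph Q delta sigma"
  using assms unfolding is_dfa_def dfa_rotation_def by blast

lemma rotation_system_exists:
  assumes fin: "finite Alph" "finite Q"
  obtains sigma where "rotation_system Alph Q delta sigma"
proof -
  let ?D = "darts Alph Q"
  let ?S = "\<lambda>q. {d \<in> ?D. dart_vertex delta d = q}"
  have "\<forall>q. \<exists>xs. distinct xs \<and> set xs = ?S q"
  proof
    fix q
    have "finite (?S q)" using finite_darts[OF fin] by simp
    then show "\<exists>xs. distinct xs \<and> set xs = ?S q" using finite_distinct_list by blast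
  qed
  from choice[OF this] obtain L where "\<forall>q. distinct (L q) \<and> set (L q) = ?S q" by blast
  then have L: "distinct (L q)" "set (L q) = ?S q" for q by simp_all
  define sigma where "sigma d = cycle_of_list (L (dart_vertex delta d)) d" for d
  have cycle_permutes: "cycle_of_list (L q) permutes ?S q" for q
    using cycle_permutes[of "L q"] L(2) by simp
  have sigma_at: "sigma d \<in> ?D \<and> dart_vertex delta (sigma d) = dart_vertex delta d" if "d \<in> ?D" for d
  proof -
    have "d \<in> ?S (dart_vertex delta d)" using that by simp
    then show ?thesis
      using permutes_in_image[OF cycle_permutes] unfolding sigma_def by blast
  qed
  have "inj_on sigma ?D"
  proof (rule inj_onI)
    fix d e assume de: "d \<in> ?D" "e \<in> ?D" "sigma d = sigma e"
    then have "dart_vertex delta d = dart_vertex delta e" using sigma_at by metis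
    then have "cycle_of_list (L (dart_vertex delta d)) d = cycle_of_list (L (dart_vertex delta d)) e"
      using de(3) unfolding sigma_def by simp
    then show "d = e" using permutes_inj[OF cycle_permutes] by (metis injD)
  qed
  moreover have "sigma ` ?D \<subseteq> ?D" using sigma_at by blast
  ultimately have bij: "bij_betw sigma ?D ?D"
    using endo_inj_surj[OF finite_darts[OF fin]] unfolding bij_betw_def by blast
  have "\<exists>n. (sigma ^^ n) d = e"
    if de: "d \<in> ?D" "e \<in> ?D" "dart_vertex delta d = dart_vertex delta e" for d e
  proof -
    let ?q = "dart_vertex delta d"
    let ?c = "cycle_of_list (L ?q)"
    have "d \<in> set (L ?q)" "e \<in> set (L ?q)" using L(2) de by auto
    then obtain i j where ij: "i < length (L ?q)" "L ?q ! i = d" "j < length (L ?q)" "L ?q ! j = e"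
      by (meson in_set_conv_nth)
    define n where "n = j + length (L ?q) - i"
    have "(?c ^^ n) d = map (?c ^^ n) (L ?q) ! i" using ij(1,2) by simp
    also have "\<dots> = rotate n (L ?q) ! i" by (simp only: cyclic_rotation[OF L(1)])
    also have "\<dots> = L ?q ! ((i + n) mod length (L ?q))"
      using nth_rotate[OF ij(1), of n] by (simp add: add.commute)
    also have "(i + n) mod length (L ?q) = j" unfolding n_def using ij by simp
    finally have "(?c ^^ n) d = e" using ij by simp
    moreover have "(sigma ^^ n) d = (?c ^^ n) d"
    proof (rule funpow_eq_if_agree)
      fix i
      have "(?c ^^ i) d \<in> ?S ?q"
        using permutes_in_image[OF permutes_funpow[OF cycle_permutes]] de(1) by blast
      then show "sigma ((?c ^^ i) d) = ?c ((?c ^^ i) d)" unfolding sigma_def by simp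
    qed
    ultimately show ?thesis by auto
  qed
  then have "rotation_system Alph Q delta sigma"
    unfolding rotation_system_def using bij sigma_at by blast
  then show thesis by (rule that)
qed

lemma dfa_genus_eq_least_euler_genus:
  assumes "is_dfa Alph Q q0 F delta" "Alph \<noteq> {}"
  shows "dfa_genus Alph Q delta = (LEAST g. \<exists>sigma. rotation_system Alph Q delta sigma \<and>
     euler_genus (vertex_perm Alph Q sigma) (edge_perm Alph Q) (darts Alph Q) = 2 * int g)"
proof -
  have "int (card Q) - int (card Q * card Alph) + int (num_faces Alph Q delta sigma)
      = 2 * int (num_components Alph Q delta) - 2 * int g
    \<longleftrightarrow> euler_genus (vertex_perm Alph Q sigma) (edge_perm Alph Q) (darts Alph Q) = 2 * int g"
    if "rotation_system Alph Q delta sigma" for sigma g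
    using dfa_rotation.euler_formula[OF dfa_rotationI[OF assms that]] by linarith
  then show ?thesis unfolding dfa_genus_def by (simp cong: conj_cong)
qed

lemma dfa_genus_le:
  assumes dfa: "is_dfa Alph Q q0 F delta" "Alph \<noteq> {}" and rot: "rotation_system Alph Q delta sigma"
    and le: "euler_genus (vertex_perm Alph Q sigma) (edge_perm Alph Q) (darts Alph Q) \<le> 2 * int g"
  shows "dfa_genus Alph Q delta \<le> g"
proof -
  let ?e = "euler_genus (vertex_perm Alph Q sigma) (edge_perm Alph Q) (darts Alph Q)"
  obtain h where h: "?e = 2 * int h"
    using euler_genus_eq_twice[OF dfa_rotation.comb_map[OF dfa_rotationI[OF dfa rot]]] .
  then have "dfa_genus Alph Q delta \<le> h"
    unfolding dfa_genus_eq_least_euler_genus[OF dfa] using rot by (intro Least_le) blast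
  moreover have "h \<le> g" using h le by simp
  ultimately show ?thesis by simp
qed

lemma dfa_genus_pos:
  assumes dfa: "is_dfa Alph Q q0 F delta" "Alph \<noteq> {}"
    and nonplanar: "\<And>sigma. rotation_system Alph Q delta sigma \<Longrightarrow>
      euler_genus (vertex_perm Alph Q sigma) (edge_perm Alph Q) (darts Alph Q) \<noteq> 0"
  shows "1 \<le> dfa_genus Alph Q delta"
proof -
  have fin: "finite Alph" "finite Q" using dfa(1) unfolding is_dfa_def by auto
  obtain sigma where rot: "rotation_system Alph Q delta sigma"
    using rotation_system_exists[OF fin] .
  let ?P = "\<lambda>g. \<exists>sigma. rotation_system Alph Q delta sigma \<and>
    euler_genus (vertex_perm Alph Q sigma) (edge_perm Alph Q) (darts Alph Q) = 2 * int g"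
  let ?e = "euler_genus (vertex_perm Alph Q sigma) (edge_perm Alph Q) (darts Alph Q)"
  obtain h where "?e = 2 * int h"
    using euler_genus_eq_twice[OF dfa_rotation.comb_map[OF dfa_rotationI[OF dfa rot]]] .
  then have "?P h" using rot by blast
  then have "?P (Least ?P)" by (rule LeastI)
  then obtain sigma' where rot': "rotation_system Alph Q delta sigma'"
    and "euler_genus (vertex_perm Alph Q sigma') (edge_perm Alph Q) (darts Alph Q) = 2 * int (Least ?P)"
    by blast
  with nonplanar[OF rot'] have "Least ?P \<noteq> 0" by auto
  then show ?thesis unfolding dfa_genus_eq_least_euler_genus[OF dfa] by simp
qed

definition reachable :: "'a set \<Rightarrow> (nat \<Rightarrow> 'a \<Rightarrow> nat) \<Rightarrow> nat \<Rightarrow> nat set" where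
  "reachable Alph delta q0 = {foldl delta q0 w | w. w \<in> lists Alph}"

lemma start_reachable: "q0 \<in> reachable Alph delta q0"
  unfolding reachable_def by (auto intro!: exI[where x = "[]"])

lemma reachable_step:
  assumes "q \<in> reachable Alph delta q0" "a \<in> Alph"
  shows "delta q a \<in> reachable Alph delta q0"
proof -
  obtain w where "w \<in> lists Alph" "q = foldl delta q0 w" using assms(1) unfolding reachable_def by blast
  then show ?thesis using assms(2) unfolding reachable_def by (auto intro!: exI[where x = "w @ [a]"])
qed

lemma reachable_subset:
  assumes "is_dfa Alph Q q0 F delta"
  shows "reachable Alph delta q0 \<subseteq> Q"
proof
  fix q assume "q \<in> reachable Alph delta q0"
  then obtain w where "w \<in> lists Alph" "q = foldl delta q0 w" unfolding reachable_def by blast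
  moreover have "foldl delta q' w \<in> Q" if "q' \<in> Q" "w \<in> lists Alph" for q' w
    using that assms by (induction w arbitrary: q') (auto simp: is_dfa_def)
  ultimately show "q \<in> Q" using assms unfolding is_dfa_def by blast
qed

lemma count_list_replicate: "count_list (replicate k x) y = (if x = y then k else 0)"
  by (induction k) auto

text \<open>Along a dart, the number of letters \<open>c\<close> read changes by \<open>dart_shift c\<close>: the edge of
  \<open>(q, a, b)\<close> reads the letter \<open>a\<close>, forwards if \<open>b\<close> and backwards otherwise.\<close>

fun dart_shift :: "'a \<Rightarrow> nat \<times> 'a \<times> bool \<Rightarrow> int" where
  "dart_shift c (q, a, b) = (if a = c then (if b then 1 else -1) else 0)"

definition letter_potential :: "(nat \<Rightarrow> nat \<Rightarrow> nat) \<Rightarrow> nat \<Rightarrow> nat \<Rightarrow> nat \<Rightarrow> int" where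
  "letter_potential delta q0 c q =
     int (count_list (SOME w. w \<in> lists {0, 1} \<and> foldl delta q0 w = q) c)"

locale L_np_dfa =
  fixes n p :: nat and Q :: "nat set" and q0 :: nat and F :: "nat set"
    and delta :: "nat \<Rightarrow> nat \<Rightarrow> nat"
  assumes n: "4 \<le> n" and p: "4 \<le> p" and dfa: "is_dfa {0, 1} Q q0 F delta"
    and lang: "dfa_lang {0, 1} q0 F delta = L_np n p"
begin

abbreviation "R \<equiv> reachable {0, 1} delta q0"
abbreviation "K \<equiv> darts {0, 1::nat} R"
abbreviation "pot \<equiv> letter_potential delta q0"
abbreviation "vtx \<equiv> dart_vertex delta"

lemma in_L_np: "w \<in> lists {0, 1} \<Longrightarrow> w \<in> L_np n p \<longleftrightarrow> foldl delta q0 w \<in> F"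
  using lang unfolding dfa_lang_def by blast

text \<open>Myhill--Nerode: appending a word that completes the letter counts of \<open>w\<close> to multiples of
  \<open>n\<close> and \<open>p\<close> shows that the state reached determines the counts modulo \<open>n\<close> and \<open>p\<close>.\<close>

lemma same_state_count_cong:
  assumes w: "w \<in> lists {0, 1}" "w' \<in> lists {0, 1}" "foldl delta q0 w = foldl delta q0 w'"
    and cm: "(c, m) \<in> {(0, n), (1, p)}"
  shows "int m dvd int (count_list w' c) - int (count_list w c)"
proof -
  define u where "u = replicate ((n - 1) * count_list w 0) (0::nat) @ replicate ((p - 1) * count_list w 1) 1"
  have "u \<in> lists {0, 1}" unfolding u_def by auto
  have count_u: "count_list u c' = (m' - 1) * count_list w c'"
    if "(c', m') \<in> {(0, n), (1, p)}" for c' m'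
    using that unfolding u_def by (auto simp: count_list_replicate)
  have count_wu: "count_list (w @ u) c' = m' * count_list w c'"
    if "(c', m') \<in> {(0, n), (1, p)}" for c' m'
  proof -
    have "1 \<le> m'" using that n p by auto
    then show ?thesis using count_u[OF that] by (cases m') simp_all
  qed
  have "w @ u \<in> L_np n p"
    using count_wu[of 0 n] count_wu[of 1 p] w(1) \<open>u \<in> lists {0, 1}\<close> unfolding L_np_def by simp
  then have "w' @ u \<in> L_np n p" using in_L_np w \<open>u \<in> lists {0, 1}\<close> by simp
  then have "m dvd count_list w' c + count_list u c" using cm unfolding L_np_def by auto
  then have "int m dvd int (count_list w' c + (m - 1) * count_list w c)"
    unfolding count_u[OF cm] by (simp only: of_nat_dvd_iff)
  moreover have "1 \<le> m" using cm n p by auto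
  ultimately have "int m dvd int (count_list w' c) + (int m - 1) * int (count_list w c)"
    by (simp add: of_nat_diff)
  then have "int m dvd int (count_list w' c) + (int m - 1) * int (count_list w c)
      - int m * int (count_list w c)" by (simp add: dvd_diff)
  then show ?thesis by (simp add: algebra_simps)
qed

lemma potential_cong:
  assumes "w \<in> lists {0, 1}" "(c, m) \<in> {(0, n), (1, p)}"
  shows "int m dvd int (count_list w c) - pot c (foldl delta q0 w)"
proof -
  let ?w = "SOME w'. w' \<in> lists {0, 1} \<and> foldl delta q0 w' = foldl delta q0 w"
  have "?w \<in> lists {0, 1} \<and> foldl delta q0 ?w = foldl delta q0 w"
    by (rule someI[where x = w]) (use assms(1) in simp)
  then show ?thesis
    using same_state_count_cong[OF _ assms(1) _ assms(2), of ?w] unfolding letter_potential_def by simp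
qed

lemma reachable_witness:
  assumes "q \<in> R"
  obtains w where "w \<in> lists {0, 1}" "foldl delta q0 w = q"
  using assms unfolding reachable_def by blast

lemma potential_step:
  assumes "q \<in> R" "a \<in> {0, 1}" "(c, m) \<in> {(0, n), (1, p)}"
  shows "int m dvd pot c (delta q a) - pot c q - (if a = c then 1 else 0)"
proof -
  obtain w where w: "w \<in> lists {0, 1}" "foldl delta q0 w = q" using reachable_witness[OF assms(1)] .
  have "int m dvd int (count_list w c) - pot c q"
    using potential_cong[OF w(1) assms(3)] w(2) by simp
  moreover have "int m dvd int (count_list (w @ [a]) c) - pot c (foldl delta q0 (w @ [a]))"
    using w(1) assms(2) by (intro potential_cong[OF _ assms(3)]) simp
  ultimately have "int m dvd (int (count_list w c) - pot c q)
      - (int (count_list (w @ [a]) c) - pot c (foldl delta q0 (w @ [a])))"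
    by (rule dvd_diff)
  moreover have "(int (count_list w c) - pot c q)
      - (int (count_list (w @ [a]) c) - pot c (foldl delta q0 (w @ [a])))
      = pot c (delta q a) - pot c q - (if a = c then 1 else 0)"
    using w(2) by simp
  ultimately show ?thesis by metis
qed

lemma dart_ends_reachable:
  assumes "d \<in> K"
  shows "vtx d \<in> R" "vtx (dart_rev d) \<in> R"
proof -
  obtain q a b where d: "d = (q, a, b)" "q \<in> R" "a \<in> {0, 1}" using assms by (cases d) auto
  have "delta q a \<in> R" using reachable_step[OF d(2,3)] .
  then show "vtx d \<in> R" "vtx (dart_rev d) \<in> R" using d by auto
qed

lemma dart_potential:
  assumes "d \<in> K" "(c, m) \<in> {(0, n), (1, p)}"
  shows "int m dvd pot c (vtx (dart_rev d)) - pot c (vtx d) - dart_shift c d"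
proof -
  obtain q a b where d: "d = (q, a, b)" "q \<in> R" "a \<in> {0, 1}" using assms(1) by (cases d) auto
  have step: "int m dvd pot c (delta q a) - pot c q - (if a = c then 1 else 0)"
    using potential_step[OF d(2,3) assms(2)] .
  show ?thesis
  proof (cases b)
    case True then show ?thesis using step d by (cases "a = c") simp_all
  next
    case False
    have "pot c q - pot c (delta q a) - dart_shift c d
        = - (pot c (delta q a) - pot c q - (if a = c then 1 else 0))"
      using d False by simp
    then show ?thesis using step d False by (simp only: dart_vertex.simps dart_rev.simps if_False
          if_True not_False_eq_True dvd_minus_iff)
  qed
qed

lemma small_multiple_eq_0:
  fixes x :: int
  assumes "int m dvd x" "\<bar>x\<bar> < int m"
  shows "x = 0"
proof (rule ccontr)
  assume "x \<noteq> 0"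
  then show False using dvd_imp_le_int[OF \<open>x \<noteq> 0\<close> assms(1)] assms(2) by simp
qed

lemma face_walk_in_K:
  assumes "s ` K \<subseteq> K" "d \<in> K"
  shows "((s \<circ> dart_rev) ^^ i) d \<in> K"
proof (induction i)
  case (Suc i)
  have "s (dart_rev (((s \<circ> dart_rev) ^^ i) d)) \<in> K"
    using assms(1) dart_rev_in_darts[OF Suc] by blast
  then show ?case unfolding funpow.simps(2) comp_def by simp
qed (use assms(2) in simp)

text \<open>A face walk through reachable states changes both letter counts by at most \<open>3\<close> in at most
  three steps; returning to its start it must change them by multiples of \<open>n, p \<ge> 4\<close>, i.e.
  not at all. An odd number of \<open>\<plusminus>1\<close> steps cannot cancel, and two cancelling steps would
  traverse one edge back and forth, which needs a vertex with a single dart.\<close>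

lemma face_walk_length_ge_4:
  assumes sK: "s ` K \<subseteq> K" and s_vtx: "\<forall>w\<in>K. vtx (s w) = vtx w" and no_fix: "\<forall>k\<in>K. s k \<noteq> k"
    and d: "d \<in> K" and j: "j \<in> {1, 2, 3}"
  shows "((s \<circ> dart_rev) ^^ j) d \<noteq> d"
proof
  assume closed: "((s \<circ> dart_rev) ^^ j) d = d"
  define ds where "ds i = ((s \<circ> dart_rev) ^^ i) d" for i
  have ds_Suc: "ds (Suc i) = s (dart_rev (ds i))" for i by (simp add: ds_def)
  have ds_K: "ds i \<in> K" for i
    unfolding ds_def using sK d by (rule face_walk_in_K)
  have vtx_Suc: "vtx (ds (Suc i)) = vtx (dart_rev (ds i))" for i
    using s_vtx dart_rev_in_darts[OF ds_K] ds_Suc by simp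
  have walk: "int m dvd pot c (vtx (ds i)) - pot c (vtx d) - (\<Sum>l<i. dart_shift c (ds l))"
    if cm: "(c, m) \<in> {(0, n), (1, p)}" for c m i
  proof (induction i)
    case (Suc i)
    have "int m dvd pot c (vtx (ds (Suc i))) - pot c (vtx (ds i)) - dart_shift c (ds i)"
      using dart_potential[OF ds_K cm] vtx_Suc by simp
    from dvd_add[OF Suc this] show ?case by (simp add: algebra_simps)
  qed (simp add: ds_def)
  have shift_bound: "\<bar>dart_shift c e\<bar> \<le> 1" for c e
    by (cases e) auto
  have sum_zero: "(\<Sum>l<j. dart_shift c (ds l)) = 0" if cm: "(c, m) \<in> {(0, n), (1, p)}" for c m
  proof (rule small_multiple_eq_0)
    show "int m dvd (\<Sum>l<j. dart_shift c (ds l))"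
      using walk[OF cm, of j] closed unfolding ds_def by (simp add: dvd_minus_iff)
    have "\<bar>\<Sum>l<j. dart_shift c (ds l)\<bar> \<le> (\<Sum>l<j. \<bar>dart_shift c (ds l)\<bar>)" by (rule sum_abs)
    also have "\<dots> \<le> (\<Sum>l<j. 1)" by (rule sum_mono) (rule shift_bound)
    also have "\<dots> < int m" using j cm n p by auto
    finally show "\<bar>\<Sum>l<j. dart_shift c (ds l)\<bar> < int m" .
  qed
  have odd: "odd (dart_shift 0 (ds l) + dart_shift 1 (ds l))" for l
    using ds_K[of l] by (cases "ds l") auto
  have total: "(\<Sum>l<j. dart_shift 0 (ds l) + dart_shift 1 (ds l)) = 0"
    using sum_zero[of 0 n] sum_zero[of 1 p] by (simp add: sum.distrib)
  consider "j = 1" | "j = 2" | "j = 3" using j by blast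
  then show False
  proof cases
    case 1
    then show False using total odd[of 0] by simp
  next
    case 3
    then show False using total odd[of 0] odd[of 1] odd[of 2]
      by (simp add: numeral_3_eq_3 numeral_2_eq_2) presburger
  next
    case 2
    obtain q a b where d_eq: "d = (q, a, b)" by (cases d)
    obtain q' a' b' where ds1: "ds 1 = (q', a', b')" by (cases "ds 1")
    have "a \<in> {0, 1}" using d d_eq by auto
    then have "dart_shift a (ds 0) + dart_shift a (ds 1) = 0"
      using sum_zero[of 0 n] sum_zero[of 1 p] 2 by (auto simp: numeral_2_eq_2)
    then have "a' = a" "b' = (\<not> b)"
      using d_eq ds1 by (auto simp: ds_def split: if_splits)
    moreover have "vtx (ds 1) = vtx (dart_rev d)" using vtx_Suc[of 0] by (simp add: ds_def)
    moreover have "vtx (dart_rev (ds 1)) = vtx d"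
      using vtx_Suc[of 1] closed 2 by (simp add: ds_def numeral_2_eq_2)
    ultimately have "ds 1 = dart_rev d" using d_eq ds1 by (cases b) auto
    then have "s (dart_rev d) = dart_rev d" using ds_Suc[of 0] by (simp add: ds_def)
    then show False using no_fix dart_rev_in_darts[OF d] by blast
  qed
qed

theorem rotation_euler_genus_ge_2:
  assumes rot: "rotation_system {0, 1} Q delta sigma"
  shows "2 \<le> euler_genus (vertex_perm {0, 1} Q sigma) (edge_perm {0, 1} Q) (darts {0, 1} Q)"
proof -
  interpret rotation: dfa_rotation "{0, 1}" Q delta sigma
    by (rule dfa_rotationI[OF dfa _ rot]) simp
  let ?s = "vertex_perm {0, 1} Q sigma" and ?r = "edge_perm {0, 1::nat} Q" and ?X = "darts {0, 1::nat} Q"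
  have KX: "K \<subseteq> ?X" using reachable_subset[OF dfa] by (auto simp: darts_def)
  have r_K: "?r d = dart_rev d" if "d \<in> K" for d using that KX by (auto simp: edge_perm_def)
  have rK: "?r ` K \<subseteq> K"
  proof
    fix e assume "e \<in> ?r ` K"
    then obtain d where d: "d \<in> K" "e = ?r d" by (rule imageE)
    have "e = dart_rev d" using d(2) r_K[OF d(1)] by (rule trans)
    then show "e \<in> K" using dart_rev_in_darts[OF d(1)] by (simp only:)
  qed
  have s_vtx: "\<forall>w\<in>?X. vtx (?s w) = vtx w"
    using rotation.vtx_sigma by (simp add: vertex_perm_def)
  have s_orbit: "\<forall>k\<in>K. \<forall>k'\<in>K. vtx k = vtx k' \<longrightarrow> k' \<in> orbit ?s k"
  proof (intro ballI impI)
    fix k k' assume "k \<in> K" "k' \<in> K" "vtx k = vtx k'"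
    then have "k \<in> ?X" "k' \<in> ?X" using KX by blast+
    then show "k' \<in> orbit ?s k"
      unfolding rotation.orbit_vertex_perm[OF \<open>k \<in> ?X\<close>] using \<open>vtx k = vtx k'\<close>[symmetric] by blast
  qed
  obtain s where map: "comb_map s ?r ?X" and le: "euler_genus s ?r ?X \<le> euler_genus ?s ?r ?X"
    and sK: "s ` K \<subseteq> K" and vtx_s: "\<forall>w\<in>?X. vtx (s w) = vtx w"
    and orbit_s: "\<forall>k\<in>K. \<forall>k'\<in>K. vtx k = vtx k' \<longrightarrow> k' \<in> orbit s k"
    using split_off_invariant[OF rotation.comb_map KX rK s_vtx s_orbit] by blast
  note split = euler_genus_add[OF map KX sK rK]
  have perm_s: "permutation s" and perm_r: "permutation ?r"
    using comb_mapD[OF map] by simp_all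
  have "finite Q" using dfa unfolding is_dfa_def by blast
  then have finite_R: "finite R" using reachable_subset[OF dfa] by (rule finite_subset[rotated])
  have vertex_orbit: "orbit s k \<subseteq> {e \<in> K. vtx e = vtx k}" if "k \<in> K" for k
  proof
    fix e assume "e \<in> orbit s k"
    then show "e \<in> {e \<in> K. vtx e = vtx k}"
    proof induction
      case base then show ?case using sK vtx_s KX that by auto
    next
      case (step e) then show ?case using sK vtx_s KX by auto
    qed
  qed
  have no_fix: "\<forall>k\<in>K. s k \<noteq> k"
  proof
    fix k assume k: "k \<in> K"
    then have "(vtx k, 0, True) \<in> K" "(vtx k, 1, True) \<in> K" using dart_ends_reachable(1)[OF k] by auto
    then have "(vtx k, 0, True) \<in> orbit s k" "(vtx k, 1, True) \<in> orbit s k" using orbit_s k by auto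
    moreover have "(vtx k, 0::nat, True) \<noteq> (vtx k, 1, True)" by simp
    ultimately have "orbit s k \<noteq> {k}" by (metis singletonD)
    then show "s k \<noteq> k" by (simp add: orbit_eq_singleton_iff)
  qed
  have "2 \<le> euler_genus s ?r K"
  proof (rule euler_genus_ge_2[OF split(2)])
    have "(q0, 0, True) \<in> K" using start_reachable[of q0 "{0, 1::nat}" delta] by simp
    then show "K \<noteq> {}" by blast
    have "orbit s ` K \<subseteq> (\<lambda>q. {e \<in> K. vtx e = q}) ` R"
    proof
      fix S assume "S \<in> orbit s ` K"
      then obtain k where k: "k \<in> K" "S = orbit s k" by (rule imageE)
      have "S = {e \<in> K. vtx e = vtx k}"
      proof
        show "S \<subseteq> {e \<in> K. vtx e = vtx k}" using vertex_orbit[OF k(1)] k(2) by simp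
        show "{e \<in> K. vtx e = vtx k} \<subseteq> S" using orbit_s k by fastforce
      qed
      then show "S \<in> (\<lambda>q. {e \<in> K. vtx e = q}) ` R" using dart_ends_reachable(1)[OF k(1)] by (rule image_eqI)
    qed
    then have "num_orbits s K \<le> card ((\<lambda>q. {e \<in> K. vtx e = q}) ` R)"
      unfolding num_orbits_def using finite_R by (intro card_mono) simp_all
    also have "\<dots> \<le> card R" using finite_R by (rule card_image_le)
    finally show "4 * num_orbits s K \<le> card K" using card_darts[OF _ finite_R, of "{0, 1::nat}"] by simp
    show "?r x \<noteq> x" if "x \<in> K" for x using r_K[OF that] by (cases x) auto
    show "4 \<le> card (orbit (s \<circ> ?r) x)" if x: "x \<in> K" for x
    proof (rule card_orbit_ge)
      show "permutation (s \<circ> ?r)" using perm_s perm_r by (rule permutation_compose)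
      fix j :: nat assume "0 < j" "j < 4"
      have "((s \<circ> ?r) ^^ j) x = ((s \<circ> dart_rev) ^^ j) x"
      proof (rule funpow_eq_if_agree)
        fix i
        have "((s \<circ> dart_rev) ^^ i) x \<in> K" using sK x by (rule face_walk_in_K)
        then show "(s \<circ> ?r) (((s \<circ> dart_rev) ^^ i) x) = (s \<circ> dart_rev) (((s \<circ> dart_rev) ^^ i) x)"
          using r_K by simp
      qed
      moreover have "((s \<circ> dart_rev) ^^ j) x \<noteq> x"
      proof (rule face_walk_length_ge_4[OF sK _ no_fix x])
        show "\<forall>w\<in>K. vtx (s w) = vtx w" using vtx_s KX by blast
        show "j \<in> {1, 2, 3}" using \<open>0 < j\<close> \<open>j < 4\<close> by auto
      qed
      ultimately show "((s \<circ> ?r) ^^ j) x \<noteq> x" by simp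
    qed
  qed
  moreover have "0 \<le> euler_genus s ?r (?X - K)" using euler_genus_nonneg_even[OF split(3)] by simp
  ultimately show ?thesis using split(1) le by linarith
qed

end

lemma foldl_reach:
  assumes "is_dfa Alph Q q0 F delta" "q \<in> Q" "w \<in> lists Alph"
  shows "(q, foldl delta q w) \<in> (graph_edges Alph Q delta \<union> (graph_edges Alph Q delta)\<inverse>)\<^sup>*"
  using assms(2,3)
proof (induction w arbitrary: q)
  case (Cons a w)
  then have "(q, delta q a) \<in> graph_edges Alph Q delta" "delta q a \<in> Q"
    using assms(1) unfolding graph_edges_def is_dfa_def by auto
  then show ?case using Cons by (auto intro: converse_rtrancl_into_rtrancl)
qed simp

lemma num_components_le_1:
  assumes dfa: "is_dfa Alph Q q0 F delta" and all_reachable: "Q \<subseteq> reachable Alph delta q0"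
  shows "num_components Alph Q delta \<le> 1"
proof -
  let ?R = "(graph_edges Alph Q delta \<union> (graph_edges Alph Q delta)\<inverse>)\<^sup>*"
  have "sym ?R" by (intro sym_rtrancl sym_Un_converse)
  have "?R `` {q} = ?R `` {q0}" if q: "q \<in> Q" for q
  proof -
    obtain w where "w \<in> lists Alph" "q = foldl delta q0 w"
      using q all_reachable unfolding reachable_def by blast
    moreover have "q0 \<in> Q" using dfa unfolding is_dfa_def by blast
    ultimately have "(q0, q) \<in> ?R" using foldl_reach[OF dfa] by blast
    moreover from this have "(q, q0) \<in> ?R" using \<open>sym ?R\<close> by (blast dest: symD)
    ultimately show ?thesis using rtrancl_trans[of q0 q] rtrancl_trans[of q q0] by blast
  qed
  then have "Q // ?R \<subseteq> {?R `` {q0}}" by (auto elim!: quotientE)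
  then have "card (Q // ?R) \<le> card {?R `` {q0}}" by (intro card_mono) simp_all
  then show ?thesis unfolding num_components_def by simp
qed

definition torus_shift :: "nat \<Rightarrow> nat \<Rightarrow> nat \<Rightarrow> nat \<Rightarrow> nat \<Rightarrow> nat" where
  "torus_shift n p a b q = (q mod n + a) mod n + n * ((q div n + b) mod p)"

definition torus_delta :: "nat \<Rightarrow> nat \<Rightarrow> nat \<Rightarrow> nat \<Rightarrow> nat" where
  "torus_delta n p q c = (if c = 0 then torus_shift n p 1 0 q else torus_shift n p 0 1 q)"

fun torus_rotation :: "nat \<Rightarrow> nat \<Rightarrow> nat \<times> nat \<times> bool \<Rightarrow> nat \<times> nat \<times> bool" where
  "torus_rotation n p (q, a, b) =
     (if a = 0 then (if b then (q, 1, True) else (torus_shift n p 1 (p - 1) q, 1, False))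
      else (if b then (torus_shift n p (n - 1) 0 q, 0, False) else (torus_shift n p 0 1 q, 0, True)))"

locale torus =
  fixes n p :: nat
  assumes n_pos: "0 < n" and p_pos: "0 < p"
begin

abbreviation "Q \<equiv> {..<n * p}"
abbreviation "shift \<equiv> torus_shift n p"
abbreviation "delta \<equiv> torus_delta n p"

lemma shift_less: "shift a b q < n * p"
proof -
  let ?x = "(q mod n + a) mod n" and ?y = "(q div n + b) mod p"
  have "?x < n" "?y < p" using n_pos p_pos by simp_all
  then have "?x + n * ?y < n + n * ?y" by simp
  also have "\<dots> = n * (?y + 1)" by simp
  also have "\<dots> \<le> n * p" using \<open>?y < p\<close> by (intro mult_le_mono2) simp
  finally show ?thesis unfolding torus_shift_def .
qed

lemma shift_shift [simp]: "shift a b (shift c d q) = shift (c + a) (d + b) q"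
  unfolding torus_shift_def using n_pos by (simp add: mod_add_left_eq add.assoc)

lemma shift_mod_cong:
  assumes "a mod n = a' mod n" "b mod p = b' mod p"
  shows "shift a b q = shift a' b' q"
  unfolding torus_shift_def using assms by (metis mod_add_right_eq)

lemma shift_0_0: "q < n * p \<Longrightarrow> shift 0 0 q = q"
  unfolding torus_shift_def using n_pos by (simp add: less_mult_imp_div_less mult.commute)

lemma torus_dfa: "is_dfa {0, 1} Q 0 {0} delta"
  unfolding is_dfa_def torus_delta_def using n_pos p_pos shift_less by auto

lemma foldl_torus_delta:
  assumes "w \<in> lists {0, 1}"
  shows "foldl delta 0 w = shift (count_list w 0) (count_list w 1) 0"
  using assms
proof (induction w rule: rev_induct)
  case (snoc a w)
  then have "a = 0 \<or> a = 1" by auto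
  then show ?case using snoc by (auto simp: torus_delta_def)
qed (simp add: torus_shift_def)

lemma torus_lang: "dfa_lang {0, 1} 0 {0} delta = L_np n p"
proof (intro set_eqI iffI)
  fix w assume "w \<in> dfa_lang {0, 1} 0 {0} delta"
  then have w: "w \<in> lists {0, 1}" and "foldl delta 0 w = 0" unfolding dfa_lang_def by auto
  then have "shift (count_list w 0) (count_list w 1) 0 = 0" using foldl_torus_delta[OF w] by simp
  then show "w \<in> L_np n p" unfolding L_np_def torus_shift_def using w n_pos by simp
next
  fix w assume "w \<in> L_np n p"
  then have "w \<in> lists {0, 1}" "count_list w 0 mod n = 0" "count_list w 1 mod p = 0"
    unfolding L_np_def by auto
  then show "w \<in> dfa_lang {0, 1} 0 {0} delta"
    unfolding dfa_lang_def using foldl_torus_delta[of w] by (simp add: torus_shift_def)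
qed

lemma torus_all_reachable: "Q \<subseteq> reachable {0, 1} delta 0"
proof
  fix q assume "q \<in> Q"
  let ?w = "replicate (q mod n) (0::nat) @ replicate (q div n) 1"
  have "replicate k c \<in> lists {0, 1}" if "c \<in> {0, 1}" for k c :: nat
    using that by (induction k) simp_all
  then have w: "?w \<in> lists {0, 1}" by simp
  have "q div n < p" using \<open>q \<in> Q\<close> less_mult_imp_div_less[of q p n] by (simp add: mult.commute)
  have "foldl delta 0 ?w = shift (q mod n) (q div n) 0"
    using foldl_torus_delta[OF w] by (simp add: count_list_replicate)
  also have "\<dots> = q mod n + n * (q div n)"
    unfolding torus_shift_def using \<open>q div n < p\<close> by simp
  also have "\<dots> = q" by simp
  finally have "foldl delta 0 ?w = q" .
  then show "q \<in> reachable {0, 1} delta 0"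
    unfolding reachable_def using w by (intro CollectI exI[of _ ?w]) simp
qed

lemma shift_full_turn [simp]: "shift n b q = shift 0 b q" "shift a p q = shift a 0 q"
  by (rule shift_mod_cong; simp)+

lemma n_minus_1 [simp]: "n - 1 + 1 = n" "p - 1 + 1 = p" "1 + (n - 1) = n" "1 + (p - 1) = p"
    "Suc (n - Suc 0) = n" "Suc (p - Suc 0) = p"
  using n_pos p_pos by simp_all

abbreviation "D \<equiv> darts {0, 1::nat} Q"
abbreviation "rot \<equiv> torus_rotation n p"
abbreviation "vtx \<equiv> dart_vertex delta"

lemma torus_dart_cases:
  assumes "d \<in> D"
  obtains (out0) q where "q < n * p" "d = (q, 0, True)"
    | (in0) q where "q < n * p" "d = (q, 0, False)"
    | (out1) q where "q < n * p" "d = (q, 1, True)"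
    | (in1) q where "q < n * p" "d = (q, 1, False)"
  using assms by (cases d) auto

lemma rotation_in_darts: "d \<in> D \<Longrightarrow> rot d \<in> D"
  by (cases rule: torus_dart_cases) (auto simp: shift_less)

lemma rotation_4: "d \<in> D \<Longrightarrow> (rot ^^ 4) d = d"
  by (cases rule: torus_dart_cases) (auto simp: numeral_eq_Suc shift_0_0)

lemma vtx_rotation: "d \<in> D \<Longrightarrow> vtx (rot d) = vtx d"
  by (cases rule: torus_dart_cases) (auto simp: torus_delta_def shift_0_0)

lemma dart_from_out0:
  assumes "d \<in> D"
  shows "\<exists>i<4. d = (rot ^^ i) (vtx d, 0, True)"
  using assms
proof (cases rule: torus_dart_cases)
  case (out0 q) then show ?thesis by (intro exI[where x = 0]) simp
next
  case (out1 q) then show ?thesis by (intro exI[where x = 1]) simp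
next
  case (in0 q) then show ?thesis
    by (intro exI[where x = 2]) (simp add: numeral_eq_Suc torus_delta_def shift_0_0)
next
  case (in1 q) then show ?thesis
    by (intro exI[where x = 3]) (simp add: numeral_eq_Suc torus_delta_def shift_0_0)
qed

lemma funpow_rotation_in_darts:
  assumes "d \<in> D"
  shows "(rot ^^ k) d \<in> D"
proof (induction k)
  case (Suc k)
  then show ?case using rotation_in_darts[OF Suc] by simp
qed (use assms in simp)

lemma torus_rotation_system: "rotation_system {0, 1} Q delta rot"
proof -
  have bij: "bij_betw rot D D"
  proof (rule bij_betw_byWitness[where f' = "rot ^^ 3"])
    show "\<forall>d\<in>D. (rot ^^ 3) (rot d) = d" "\<forall>d\<in>D. rot ((rot ^^ 3) d) = d"
      using rotation_4 by (simp_all add: numeral_eq_Suc)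
    show "rot ` D \<subseteq> D" using rotation_in_darts by (rule image_subsetI)
    show "(rot ^^ 3) ` D \<subseteq> D" using funpow_rotation_in_darts by (rule image_subsetI)
  qed
  have transitive: "\<exists>k. (rot ^^ k) d = e"
    if d: "d \<in> D" and e: "e \<in> D" and same: "vtx d = vtx e" for d e
  proof -
    define v where "v = (vtx d, 0::nat, True)"
    obtain i where i: "i < 4" "d = (rot ^^ i) v" using dart_from_out0[OF d] unfolding v_def by blast
    obtain j where j: "e = (rot ^^ j) v" using dart_from_out0[OF e] same unfolding v_def by auto
    have "v \<in> D"
      using d unfolding v_def by (cases rule: torus_dart_cases) (auto simp: torus_delta_def shift_less)
    have "(rot ^^ (j + (4 - i))) d = (rot ^^ j) ((rot ^^ (4 - i + i)) v)"
      unfolding i(2) by (simp add: funpow_add)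
    also have "4 - i + i = 4" using i(1) by simp
    finally have "(rot ^^ (j + (4 - i))) d = e" using rotation_4[OF \<open>v \<in> D\<close>] j by simp
    then show ?thesis by blast
  qed
  show ?thesis unfolding rotation_system_def
  proof (intro conjI ballI impI)
    fix d assume "d \<in> D"
    then show "vtx (rot d) = vtx d" by (rule vtx_rotation)
  next
    fix d e assume "d \<in> D" "e \<in> D" "vtx d = vtx e"
    then show "\<exists>k. (rot ^^ k) d = e" by (rule transitive)
  qed (rule bij)
qed

lemma face_4:
  assumes "d \<in> D"
  shows "((rot \<circ> dart_rev) ^^ 4) d = d"
  using assms by (cases rule: torus_dart_cases) (auto simp: numeral_eq_Suc shift_0_0)

lemma torus_genus_le_1: "dfa_genus {0, 1} Q delta \<le> 1"
proof -
  interpret rotation: dfa_rotation "{0, 1}" Q delta rot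
    by (rule dfa_rotationI[OF torus_dfa _ torus_rotation_system]) simp
  let ?f = "vertex_perm {0, 1} Q rot \<circ> edge_perm {0, 1::nat} Q"
  have "permutation ?f" "finite D" "?f ` D \<subseteq> D"
    using comb_mapD[OF rotation.comb_map] by (auto simp: permutation_compose)
  moreover have "card (orbit ?f d) \<le> 4" if "d \<in> D" for d
    using rotation.funpow_face_perm[OF that] face_4[OF that]
      card_orbit_le[OF \<open>permutation ?f\<close>, of 4 d] by simp
  ultimately have "card D \<le> 4 * num_orbits ?f D" by (rule card_le_num_orbits_mult)
  moreover have "num_components {0, 1} Q delta \<le> 1"
    using num_components_le_1[OF torus_dfa torus_all_reachable] .
  moreover have "card D = 4 * (n * p)"
    using card_darts[of "{0, 1::nat}" Q] by simp
  moreover have "euler_genus (vertex_perm {0, 1} Q rot) (edge_perm {0, 1} Q) D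
      = int (card D) + 2 * int (num_components {0, 1} Q delta) - int (n * p) - int (2 * (n * p))
        - int (num_orbits ?f D)"
    unfolding euler_genus_def using rotation.num_orbits_vertex_perm rotation.num_orbits_edge_perm
      rotation.num_map_components by simp
  ultimately have "euler_genus (vertex_perm {0, 1} Q rot) (edge_perm {0, 1} Q) D \<le> 2 * int 1"
    by linarith
  then show ?thesis
    by (rule dfa_genus_le[OF torus_dfa _ torus_rotation_system, rotated]) simp
qed

end

theorem proposition7:
  fixes n p :: nat
  assumes "n \<ge> 4" and "p \<ge> 4"
  shows "lang_genus {0, 1} (L_np n p) = 1"
proof -
  have genus_ge_1: "1 \<le> dfa_genus {0, 1} Q delta"
    if dfa: "is_dfa {0, 1} Q q0 F delta" and lang: "dfa_lang {0, 1} q0 F delta = L_np n p"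
    for Q q0 F delta
  proof (rule dfa_genus_pos[OF dfa])
    have "L_np_dfa n p Q q0 F delta" using assms dfa lang by unfold_locales
    then show "euler_genus (vertex_perm {0, 1} Q sigma) (edge_perm {0, 1} Q) (darts {0, 1} Q) \<noteq> 0"
      if "rotation_system {0, 1} Q delta sigma" for sigma
      using L_np_dfa.rotation_euler_genus_ge_2[OF _ that] by fastforce
  qed simp
  have "torus n p" using assms by unfold_locales simp_all
  note torus = torus.torus_dfa[OF this] torus.torus_lang[OF this] torus.torus_genus_le_1[OF this]
  have "dfa_genus {0, 1} {..<n * p} (torus_delta n p) = 1"
    using torus(3) genus_ge_1[OF torus(1,2)] by simp
  then show ?thesis
    unfolding lang_genus_def using torus(1,2) genus_ge_1 by (intro Least_equality) blast+
qed

end
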